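(* Let $\{X_{n}, \, n \geqslant 1 \}$ be a sequence of identically distributed and pairwise positively quadrant dependent random variables satisfying \[ \sum_{1 \leqslant k < j < \infty} \frac{G_{X_{k},X_{j}}(k,j)}{kj} < \infty . \] Then $\mathbb{E} \lvert X_{1} \rvert < \infty$ if and only if $\frac{1}{n}\sum_{k=1}^{n} (X_{k} - \mathbb{E} \, X_{1}) \to 0$ almost surely.
   Context: A sequence $\{X_{n}, \, n \geqslant 1 \}$ of random variables is pairwise positively quadrant dependent (pairwise PQD) if $\mathbb{P}\{X_{k} \leqslant x_{k}, X_{j} \leqslant x_{j}\} - \mathbb{P}\{X_{k} \leqslant x_{k}\}\mathbb{P}\{X_{j} \leqslant x_{j}\} \geqslant 0$ for all reals $x_{k}, x_{j}$ and all positive integers $k \neq j$. For random variables $X_k, X_j$ and $u,v>0$, \[ G_{X_{k},X_{j}}(u,v) := \int_{-v}^{v} \int_{-u}^{u} \big[\mathbb{P} \{X_{k} > x, X_{j} > y \} - \mathbb{P} \{X_{k} > x \} \mathbb{P} \{X_{j} > y \}\big] \, \mathrm{d}x \, \mathrm{d}y . \] *)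

theory Defs
  imports "HOL-Probability.Probability"
begin

definition pairwise_PQD :: "'a measure \<Rightarrow> (nat \<Rightarrow> 'a \<Rightarrow> real) \<Rightarrow> bool" where
  "pairwise_PQD M X \<longleftrightarrow>
     (\<forall>k j x y. 1 \<le> k \<and> 1 \<le> j \<and> k \<noteq> j \<longrightarrow>
        measure M {\<omega> \<in> space M. X k \<omega> \<le> x \<and> X j \<omega> \<le> y}
          - measure M {\<omega> \<in> space M. X k \<omega> \<le> x} * measure M {\<omega> \<in> space M. X j \<omega> \<le> y} \<ge> 0)"

definition G :: "'a measure \<Rightarrow> ('a \<Rightarrow> real) \<Rightarrow> ('a \<Rightarrow> real) \<Rightarrow> real \<Rightarrow> real \<Rightarrow> real" where
  "G M Y Z u v =
     (LBINT y=-v..v. (LBINT x=-u..u.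
        measure M {\<omega> \<in> space M. Y \<omega> > x \<and> Z \<omega> > y}
        - measure M {\<omega> \<in> space M. Y \<omega> > x} * measure M {\<omega> \<in> space M. Z \<omega> > y}))"

end

theory Submission
  imports Defs
begin

text \<open>
  Clip \<open>X\<^sub>i\<close> to a subinterval of \<open>[-i, i]\<close> and \<open>X\<^sub>j\<close> to one of \<open>[-j, j]\<close>. By Hoeffding's
  identity the covariance of the two clipped variables is the integral over the product of the
  intervals of \<open>P(X\<^sub>i > s, X\<^sub>j > t) - P(X\<^sub>i > s) P(X\<^sub>j > t)\<close>, which is nonnegative under
  positive quadrant dependence. Hence these covariances lie between \<open>0\<close> and \<open>G(i, j)\<close>, and this is
  all the proof uses about the dependence structure.

  Splitting \<open>X\<^sub>n\<close> into its positive and negative parts, the direct implication is Etemadi's proof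
  of the strong law: the truncations \<open>min X\<^sub>n\<^sup>+ n\<close> have summable normalised variances along the
  subsequences \<open>\<lfloor>\<alpha>\<^sup>m\<rfloor>\<close> (Chebyshev and Borel-Cantelli), they eventually agree with
  \<open>X\<^sub>n\<^sup>+\<close> when \<open>E X\<^sub>1\<^sup>+ < \<infinity>\<close>, and monotonicity of the partial sums closes the gaps
  as \<open>\<alpha> \<rightarrow> 1\<close>.

  Conversely, convergence of the averages forces \<open>X\<^sub>n / n \<rightarrow> 0\<close> almost surely. If
  \<open>E X\<^sub>1\<^sup>+ = \<infinity>\<close>, the variables \<open>Z\<^sub>n = min 1 (max 0 (2 X\<^sub>n / n - 1))\<close> have divergent
  expected partial sums, while their pairwise covariances sum to at most \<open>4 \<Sum> G(i, j) / (i j)\<close>.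
  Chebyshev's inequality then gives \<open>Z\<^sub>n > 0\<close>, i.e. \<open>X\<^sub>n > n / 2\<close>, infinitely often almost
  surely, a contradiction.
\<close>

lemma set_integrable_Icc_bounded:
  fixes f :: "real \<Rightarrow> real"
  assumes "f \<in> borel_measurable borel" "\<And>x. \<bar>f x\<bar> \<le> B"
  shows "set_integrable lborel {a..b} f"
  unfolding set_integrable_def
  using assms by (intro integrableI_bounded_set_indicator[where B=B]) (auto simp: emeasure_lborel_Icc_eq)

lemma set_integral_Icc_abs_le:
  fixes f :: "real \<Rightarrow> real"
  assumes "f \<in> borel_measurable borel" "\<And>x. \<bar>f x\<bar> \<le> B" "a \<le> b"
  shows "\<bar>LBINT x:{a..b}. f x\<bar> \<le> B * (b - a)"
proof -
  have "\<bar>LBINT x:{a..b}. f x\<bar> \<le> (LBINT x:{a..b}. B)"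
    unfolding set_lebesgue_integral_def
    using set_integrable_Icc_bounded[OF assms(1,2)] set_integrable_Icc_bounded[of "\<lambda>_. B" "\<bar>B\<bar>"] assms(2)
    by (intro integral_abs_bound_integral) (auto simp: set_integrable_def indicator_def)
  also have "\<dots> = B * (b - a)"
    using assms(3) by (simp add: set_integral_const emeasure_lborel_Icc_eq)
  finally show ?thesis .
qed

lemma set_integrable_Icc_inner_integral:
  fixes f :: "real \<Rightarrow> real \<Rightarrow> real"
  assumes [measurable]: "(\<lambda>(t, s). f s t) \<in> borel_measurable (borel \<Otimes>\<^sub>M borel)"
    and "\<And>s t. \<bar>f s t\<bar> \<le> B" "a \<le> b"
  shows "set_integrable lborel {c..d} (\<lambda>t. LBINT s:{a..b}. f s t)"
proof (rule set_integrable_Icc_bounded)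
  show "(\<lambda>t. LBINT s:{a..b}. f s t) \<in> borel_measurable borel"
    unfolding set_lebesgue_integral_def by measurable
  show "\<bar>LBINT s:{a..b}. f s t\<bar> \<le> B * (b - a)" for t
    using assms by (intro set_integral_Icc_abs_le) auto
qed

lemma nn_integral_Icc_eq_set_integral:
  fixes f :: "real \<Rightarrow> real"
  assumes "f \<in> borel_measurable borel" "\<And>x. 0 \<le> f x" "\<And>x. f x \<le> B"
  shows "(\<integral>\<^sup>+x. indicator {a..b} x * ennreal (f x) \<partial>lborel) = ennreal (LBINT x:{a..b}. f x)"
proof -
  have "set_integrable lborel {a..b} f"
    using assms by (intro set_integrable_Icc_bounded[where B=B]) (auto intro: order_trans)
  then show ?thesis
    unfolding set_lebesgue_integral_def set_integrable_def real_scaleR_def indicator_mult_ennreal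
    using assms(2) by (intro nn_integral_eq_integral) auto
qed

lemma set_integral_Icc_mono_set:
  fixes f :: "real \<Rightarrow> real"
  assumes "set_integrable lborel {c..d} f" "\<And>x. 0 \<le> f x" "c \<le> a" "b \<le> d"
  shows "(LBINT x:{a..b}. f x) \<le> (LBINT x:{c..d}. f x)"
proof -
  have "set_integrable lborel {a..b} f"
    by (rule set_integrable_subset[OF assms(1)]) (use assms in auto)
  then show ?thesis
    using assms unfolding set_integrable_def set_lebesgue_integral_def
    by (intro integral_mono) (auto simp: indicator_def)
qed

section \<open>Clipped variables and Hoeffding's identity\<close>

definition ramp :: "real \<Rightarrow> real \<Rightarrow> real \<Rightarrow> real" where
  "ramp a b x = max a (min b x) - a"

lemma ramp_bounds: "a \<le> b \<Longrightarrow> 0 \<le> ramp a b x \<and> ramp a b x \<le> b - a"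
  by (auto simp: ramp_def)

lemma ramp_measurable[measurable]: "ramp a b \<in> borel_measurable borel"
  unfolding ramp_def by measurable

lemma ramp_uminus: "a \<le> b \<Longrightarrow> ramp a b (- x) = (b - a) - ramp (- b) (- a) x"
  by (auto simp: ramp_def)

lemma ramp_eq_nn_integral:
  assumes "a \<le> b"
  shows "ennreal (ramp a b x) = (\<integral>\<^sup>+t. indicator {a..b} t * of_bool (t < x) \<partial>lborel)"
proof -
  have "(\<integral>\<^sup>+t. indicator {a..b} t * of_bool (t < x) \<partial>lborel) = emeasure lborel ({a..b} \<inter> {..<x})"
    by (subst nn_integral_indicator[symmetric], simp, intro nn_integral_cong) (auto simp: indicator_def)
  also have "\<dots> = ennreal (ramp a b x)"
  proof (cases "x \<le> a")
    case True
    then have "{a..b} \<inter> {..<x} = {}" by auto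
    then show ?thesis using True by (simp add: ramp_def)
  next
    case False
    then consider "x \<le> b" "{a..b} \<inter> {..<x} = {a..<x}" | "b < x" "{a..b} \<inter> {..<x} = {a..b}"
      by fastforce
    then show ?thesis using False assms by cases (simp_all add: ramp_def)
  qed
  finally show ?thesis ..
qed

definition covariance :: "'a measure \<Rightarrow> ('a \<Rightarrow> real) \<Rightarrow> ('a \<Rightarrow> real) \<Rightarrow> real" where
  "covariance M f g = (\<integral>x. f x * g x \<partial>M) - (\<integral>x. f x \<partial>M) * (\<integral>x. g x \<partial>M)"

definition tail_cov :: "'a measure \<Rightarrow> ('a \<Rightarrow> real) \<Rightarrow> ('a \<Rightarrow> real) \<Rightarrow> real \<Rightarrow> real \<Rightarrow> real" where
  "tail_cov M X Y s t = measure M {\<omega> \<in> space M. s < X \<omega> \<and> t < Y \<omega>}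
     - measure M {\<omega> \<in> space M. s < X \<omega>} * measure M {\<omega> \<in> space M. t < Y \<omega>}"

lemma G_eq_tail_cov:
  "0 \<le> u \<Longrightarrow> 0 \<le> v \<Longrightarrow> G M X Y u v = (LBINT t:{-v..v}. LBINT s:{-u..u}. tail_cov M X Y s t)"
  unfolding G_def tail_cov_def by (simp add: interval_integral_Icc)

context prob_space
begin

lemma integrable_bounded:
  fixes f :: "'a \<Rightarrow> real"
  assumes "f \<in> borel_measurable M" "\<And>x. x \<in> space M \<Longrightarrow> \<bar>f x\<bar> \<le> B"
  shows "integrable M f"
  using assms by (intro integrable_const_bound[where B=B]) auto

lemma integrable_ramp:
  "X \<in> borel_measurable M \<Longrightarrow> a \<le> b \<Longrightarrow> integrable M (\<lambda>\<omega>. ramp a b (X \<omega>))"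
  using ramp_bounds[of a b] by (intro integrable_bounded[where B="b - a"]) auto

lemma integrable_ramp_mult:
  assumes "X \<in> borel_measurable M" "Y \<in> borel_measurable M" "a1 \<le> b1" "a2 \<le> b2"
  shows "integrable M (\<lambda>\<omega>. ramp a1 b1 (X \<omega>) * ramp a2 b2 (Y \<omega>))"
  using assms ramp_bounds[OF assms(3)] ramp_bounds[OF assms(4)]
  by (intro integrable_bounded[where B="(b1 - a1) * (b2 - a2)"]) (auto simp: abs_mult intro!: mult_mono)

lemma expectation_ramp_mult:
  assumes [measurable]: "X \<in> borel_measurable M" "Y \<in> borel_measurable M"
    and ab: "a1 \<le> b1" "a2 \<le> b2"
  shows "expectation (\<lambda>\<omega>. ramp a1 b1 (X \<omega>) * ramp a2 b2 (Y \<omega>)) =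
    (LBINT t:{a2..b2}. LBINT s:{a1..b1}. prob {\<omega>\<in>space M. s < X \<omega> \<and> t < Y \<omega>})"
proof -
  interpret pair_sigma_finite M lborel
    by (intro pair_sigma_finite.intro sigma_finite_measure_axioms lborel.sigma_finite_measure_axioms)
  let ?p = "\<lambda>s t. prob {\<omega>\<in>space M. s < X \<omega> \<and> t < Y \<omega>}"
  let ?I = "\<lambda>a b x s. indicator {a..b} s * of_bool (s < x) :: ennreal"
  have "ennreal (expectation (\<lambda>\<omega>. ramp a1 b1 (X \<omega>) * ramp a2 b2 (Y \<omega>))) =
      (\<integral>\<^sup>+\<omega>. ennreal (ramp a1 b1 (X \<omega>) * ramp a2 b2 (Y \<omega>)) \<partial>M)"
    using integrable_ramp_mult[OF assms] ramp_bounds[OF ab(1)] ramp_bounds[OF ab(2)]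
    by (intro nn_integral_eq_integral[symmetric]) auto
  also have "\<dots> = (\<integral>\<^sup>+\<omega>. ennreal (ramp a1 b1 (X \<omega>)) * ennreal (ramp a2 b2 (Y \<omega>)) \<partial>M)"
    using ramp_bounds[OF ab(1)] ramp_bounds[OF ab(2)] by (simp add: ennreal_mult)
  also have "\<dots> = (\<integral>\<^sup>+\<omega>. (\<integral>\<^sup>+t. (\<integral>\<^sup>+s. ?I a1 b1 (X \<omega>) s * ?I a2 b2 (Y \<omega>) t \<partial>lborel) \<partial>lborel) \<partial>M)"
    by (simp add: ramp_eq_nn_integral ab nn_integral_multc nn_integral_cmult)
  also have "\<dots> = (\<integral>\<^sup>+t. (\<integral>\<^sup>+\<omega>. (\<integral>\<^sup>+s. ?I a1 b1 (X \<omega>) s * ?I a2 b2 (Y \<omega>) t \<partial>lborel) \<partial>M) \<partial>lborel)"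
    by (rule Fubini'[symmetric]) measurable
  also have "\<dots> = (\<integral>\<^sup>+t. (\<integral>\<^sup>+s. (\<integral>\<^sup>+\<omega>. ?I a1 b1 (X \<omega>) s * ?I a2 b2 (Y \<omega>) t \<partial>M) \<partial>lborel) \<partial>lborel)"
    by (rule nn_integral_cong, rule Fubini'[symmetric]) measurable
  also have "\<dots> = (\<integral>\<^sup>+t. indicator {a2..b2} t * ennreal (LBINT s:{a1..b1}. ?p s t) \<partial>lborel)"
  proof (intro nn_integral_cong)
    fix t :: real
    have "(\<integral>\<^sup>+\<omega>. ?I a1 b1 (X \<omega>) s * ?I a2 b2 (Y \<omega>) t \<partial>M) =
        indicator {a2..b2} t * (indicator {a1..b1} s * ennreal (?p s t))" for s
    proof -
      have "(\<integral>\<^sup>+\<omega>. ?I a1 b1 (X \<omega>) s * ?I a2 b2 (Y \<omega>) t \<partial>M) = (\<integral>\<^sup>+\<omega>.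
          (indicator {a1..b1} s * indicator {a2..b2} t) * indicator {\<omega>\<in>space M. s < X \<omega> \<and> t < Y \<omega>} \<omega> \<partial>M)"
        by (rule nn_integral_cong) (auto simp: indicator_def)
      also have "\<dots> = (indicator {a1..b1} s * indicator {a2..b2} t) * emeasure M {\<omega>\<in>space M. s < X \<omega> \<and> t < Y \<omega>}"
        by (subst nn_integral_cmult) auto
      finally show ?thesis
        by (simp add: emeasure_eq_measure mult_ac)
    qed
    then show "(\<integral>\<^sup>+s. (\<integral>\<^sup>+\<omega>. ?I a1 b1 (X \<omega>) s * ?I a2 b2 (Y \<omega>) t \<partial>M) \<partial>lborel) =
        indicator {a2..b2} t * ennreal (LBINT s:{a1..b1}. ?p s t)"
      by (simp add: nn_integral_cmult nn_integral_Icc_eq_set_integral[where B=1])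
  qed
  also have "\<dots> = ennreal (LBINT t:{a2..b2}. LBINT s:{a1..b1}. ?p s t)"
    using set_integral_Icc_abs_le[of "\<lambda>s. ?p s _" 1 a1 b1] ab
    by (intro nn_integral_Icc_eq_set_integral[where B="b1 - a1"])
      (auto simp: set_lebesgue_integral_def intro!: integral_nonneg_AE)
  finally show ?thesis
    using ramp_bounds[OF ab(1)] ramp_bounds[OF ab(2)]
    by (subst (asm) ennreal_inj) (auto intro!: integral_nonneg_AE simp: set_lebesgue_integral_def)
qed

lemma expectation_ramp:
  assumes [measurable]: "X \<in> borel_measurable M" and ab: "a \<le> b"
  shows "expectation (\<lambda>\<omega>. ramp a b (X \<omega>)) = (LBINT s:{a..b}. prob {\<omega>\<in>space M. s < X \<omega>})"
proof -
  have "expectation (\<lambda>\<omega>. ramp a b (X \<omega>)) = expectation (\<lambda>\<omega>. ramp a b (X \<omega>) * ramp 0 1 2)"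
    by (simp add: ramp_def)
  also have "\<dots> = (LBINT t:{0..1}. LBINT s:{a..b}. prob {\<omega>\<in>space M. s < X \<omega> \<and> t < (2::real)})"
    using expectation_ramp_mult[of X "\<lambda>_. 2::real" a b 0 1] ab by simp
  also have "\<dots> = (LBINT t:{0..1::real}. LBINT s:{a..b}. prob {\<omega>\<in>space M. s < X \<omega>})"
    by (intro set_lebesgue_integral_cong) auto
  finally show ?thesis
    by (simp add: set_integral_const emeasure_lborel_Icc_eq)
qed

lemma tail_cov_measurable[measurable]:
  assumes [measurable]: "X \<in> borel_measurable M" "Y \<in> borel_measurable M"
  shows "(\<lambda>(t, s). tail_cov M X Y s t) \<in> borel_measurable (borel \<Otimes>\<^sub>M borel)"
  unfolding tail_cov_def by measurable

lemma abs_tail_cov_le_1: "\<bar>tail_cov M X Y s t\<bar> \<le> 1"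
proof -
  have "prob {\<omega>\<in>space M. s < X \<omega> \<and> t < Y \<omega>} \<le> 1"
    "prob {\<omega>\<in>space M. s < X \<omega>} * prob {\<omega>\<in>space M. t < Y \<omega>} \<le> 1"
    by (auto intro: mult_le_one)
  then show ?thesis
    unfolding tail_cov_def abs_le_iff by (smt (verit) measure_nonneg zero_le_mult_iff)
qed

lemma covariance_ramp:
  assumes [measurable]: "X \<in> borel_measurable M" "Y \<in> borel_measurable M"
    and ab: "a1 \<le> b1" "a2 \<le> b2"
  shows "covariance M (\<lambda>\<omega>. ramp a1 b1 (X \<omega>)) (\<lambda>\<omega>. ramp a2 b2 (Y \<omega>)) =
    (LBINT t:{a2..b2}. LBINT s:{a1..b1}. tail_cov M X Y s t)"
proof -
  let ?P = "\<lambda>s t. prob {\<omega>\<in>space M. s < X \<omega> \<and> t < Y \<omega>}"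
  let ?P1 = "\<lambda>s. prob {\<omega>\<in>space M. s < X \<omega>}" and ?P2 = "\<lambda>t. prob {\<omega>\<in>space M. t < Y \<omega>}"
  have "expectation (\<lambda>\<omega>. ramp a1 b1 (X \<omega>)) * expectation (\<lambda>\<omega>. ramp a2 b2 (Y \<omega>)) =
      (LBINT t:{a2..b2}. LBINT s:{a1..b1}. ?P1 s * ?P2 t)"
    by (simp add: expectation_ramp ab)
  moreover have "(LBINT t:{a2..b2}. LBINT s:{a1..b1}. tail_cov M X Y s t) =
      (LBINT t:{a2..b2}. LBINT s:{a1..b1}. ?P s t) - (LBINT t:{a2..b2}. LBINT s:{a1..b1}. ?P1 s * ?P2 t)"
  proof -
    have "(LBINT s:{a1..b1}. tail_cov M X Y s t) =
        (LBINT s:{a1..b1}. ?P s t) - (LBINT s:{a1..b1}. ?P1 s * ?P2 t)" for t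
      unfolding tail_cov_def
      by (intro set_integral_diff set_integrable_Icc_bounded[where B=1]) (auto intro: mult_le_one)
    moreover have "set_integrable lborel {a2..b2} (\<lambda>t. LBINT s:{a1..b1}. ?P s t)"
      "set_integrable lborel {a2..b2} (\<lambda>t. LBINT s:{a1..b1}. ?P1 s * ?P2 t)"
      using ab by (intro set_integrable_Icc_inner_integral[where B=1]; force intro: mult_le_one)+
    ultimately show ?thesis
      by (simp add: set_integral_diff)
  qed
  ultimately show ?thesis
    unfolding covariance_def by (simp add: expectation_ramp_mult ab)
qed

lemma tail_cov_nonneg_if_PQD:
  assumes "pairwise_PQD M X" "1 \<le> k" "1 \<le> j" "k \<noteq> j"
    and [measurable]: "X k \<in> borel_measurable M" "X j \<in> borel_measurable M"
  shows "0 \<le> tail_cov M (X k) (X j) s t"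
proof -
  let ?A = "{\<omega>\<in>space M. X k \<omega> \<le> s}" and ?B = "{\<omega>\<in>space M. X j \<omega> \<le> t}"
  have [measurable]: "?A \<in> events" "?B \<in> events"
    by measurable
  have "?A \<inter> ?B = {\<omega>\<in>space M. X k \<omega> \<le> s \<and> X j \<omega> \<le> t}"
    by auto
  then have "prob (?A \<inter> ?B) - prob ?A * prob ?B \<ge> 0"
    using assms unfolding pairwise_PQD_def by simp
  moreover have "prob (?A \<union> ?B) = prob ?A + prob ?B - prob (?A \<inter> ?B)"
    by (intro measure_Un3) (auto simp: fmeasurable_def emeasure_eq_measure)
  moreover have "{\<omega>\<in>space M. s < X k \<omega> \<and> t < X j \<omega>} = space M - (?A \<union> ?B)"
    "{\<omega>\<in>space M. s < X k \<omega>} = space M - ?A" "{\<omega>\<in>space M. t < X j \<omega>} = space M - ?B"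
    by auto
  ultimately show ?thesis
    unfolding tail_cov_def by (simp add: prob_compl sets.Un algebra_simps)
qed

lemma tail_cov_box_integral_bounds:
  assumes [measurable]: "X \<in> borel_measurable M" "Y \<in> borel_measurable M"
    and nonneg: "\<And>s t. 0 \<le> tail_cov M X Y s t"
    and box: "- u \<le> a1" "a1 \<le> b1" "b1 \<le> u" "- v \<le> a2" "a2 \<le> b2" "b2 \<le> v"
  shows "0 \<le> (LBINT t:{a2..b2}. LBINT s:{a1..b1}. tail_cov M X Y s t)"
    and "(LBINT t:{a2..b2}. LBINT s:{a1..b1}. tail_cov M X Y s t) \<le> G M X Y u v"
proof -
  have inner_nonneg: "0 \<le> (LBINT s:{c..d}. tail_cov M X Y s t)" for c d t
    unfolding set_lebesgue_integral_def by (intro integral_nonneg_AE) (auto simp: nonneg)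
  then show "0 \<le> (LBINT t:{a2..b2}. LBINT s:{a1..b1}. tail_cov M X Y s t)"
    unfolding set_lebesgue_integral_def[of _ "{a2..b2}"] by (intro integral_nonneg_AE) auto
  have "(LBINT t:{a2..b2}. LBINT s:{a1..b1}. tail_cov M X Y s t) \<le>
      (LBINT t:{a2..b2}. LBINT s:{-u..u}. tail_cov M X Y s t)"
    using box by (intro set_integral_mono set_integrable_Icc_inner_integral[where B=1]
        set_integral_Icc_mono_set set_integrable_Icc_bounded[where B=1])
      (auto simp: abs_tail_cov_le_1 abs_tail_cov_le_1[THEN abs_le_D1] nonneg)
  also have "\<dots> \<le> (LBINT t:{-v..v}. LBINT s:{-u..u}. tail_cov M X Y s t)"
    using box by (intro set_integral_Icc_mono_set set_integrable_Icc_inner_integral[where B=1])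
      (auto simp: abs_tail_cov_le_1 inner_nonneg)
  also have "\<dots> = G M X Y u v"
    using box by (simp add: G_eq_tail_cov)
  finally show "(LBINT t:{a2..b2}. LBINT s:{a1..b1}. tail_cov M X Y s t) \<le> G M X Y u v" .
qed

lemma covariance_affine:
  assumes "integrable M U" "integrable M V" "integrable M (\<lambda>x. U x * V x)"
  shows "covariance M (\<lambda>x. c + a * U x) (\<lambda>x. d + b * V x) = a * b * covariance M U V"
proof -
  have "(\<lambda>x. (c + a * U x) * (d + b * V x)) = (\<lambda>x. c * d + c * b * V x + a * d * U x + a * b * (U x * V x))"
    by (auto simp: fun_eq_iff algebra_simps)
  then show ?thesis
    using assms unfolding covariance_def by (simp add: prob_space algebra_simps)
qed

end

text \<open>Pairwise PQD gives this property with \<open>g i j = G M (X i) (X j) i j\<close>; the strong law is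
  proved from the property alone.\<close>
definition ramp_cov_bounded :: "'a measure \<Rightarrow> (nat \<Rightarrow> 'a \<Rightarrow> real) \<Rightarrow> (nat \<Rightarrow> nat \<Rightarrow> real) \<Rightarrow> bool" where
  "ramp_cov_bounded M X g \<longleftrightarrow> (\<forall>i j a1 b1 a2 b2.
     1 \<le> i \<and> i < j \<and> - real i \<le> a1 \<and> a1 \<le> b1 \<and> b1 \<le> real i \<and> - real j \<le> a2 \<and> a2 \<le> b2 \<and> b2 \<le> real j \<longrightarrow>
     covariance M (\<lambda>\<omega>. ramp a1 b1 (X i \<omega>)) (\<lambda>\<omega>. ramp a2 b2 (X j \<omega>)) \<in> {0..g i j})"

lemma ramp_cov_bounded_nonneg:
  assumes "ramp_cov_bounded M X g" "1 \<le> i" "i < j"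
  shows "0 \<le> g i j"
  using assms(1)[unfolded ramp_cov_bounded_def, rule_format, of i j 0 0 0 0] assms(2,3)
  by (simp add: ramp_def covariance_def)

context prob_space
begin

lemma ramp_cov_bounded_if_PQD:
  assumes pqd: "pairwise_PQD M X" and rv: "\<And>n. 1 \<le> n \<Longrightarrow> X n \<in> borel_measurable M"
  shows "ramp_cov_bounded M X (\<lambda>i j. G M (X i) (X j) (real i) (real j))"
  unfolding ramp_cov_bounded_def
proof (intro allI impI)
  fix i j :: nat and a1 b1 a2 b2 :: real
  assume box: "1 \<le> i \<and> i < j \<and> - real i \<le> a1 \<and> a1 \<le> b1 \<and> b1 \<le> real i \<and>
    - real j \<le> a2 \<and> a2 \<le> b2 \<and> b2 \<le> real j"
  have [measurable]: "X i \<in> borel_measurable M" "X j \<in> borel_measurable M"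
    using box rv by auto
  have "0 \<le> tail_cov M (X i) (X j) s t" for s t
    using box by (intro tail_cov_nonneg_if_PQD[OF pqd]) auto
  then show "covariance M (\<lambda>\<omega>. ramp a1 b1 (X i \<omega>)) (\<lambda>\<omega>. ramp a2 b2 (X j \<omega>)) \<in>
      {0..G M (X i) (X j) (real i) (real j)}"
    using box tail_cov_box_integral_bounds[of "X i" "X j" "real i" a1 b1 "real j" a2 b2]
    by (simp add: covariance_ramp)
qed

lemma ramp_cov_bounded_uminus:
  assumes "ramp_cov_bounded M X g" and [measurable]: "\<And>n. X n \<in> borel_measurable M"
  shows "ramp_cov_bounded M (\<lambda>n \<omega>. - X n \<omega>) g"
  unfolding ramp_cov_bounded_def
proof (intro allI impI)
  fix i j :: nat and a1 b1 a2 b2 :: real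
  assume box: "1 \<le> i \<and> i < j \<and> - real i \<le> a1 \<and> a1 \<le> b1 \<and> b1 \<le> real i \<and>
    - real j \<le> a2 \<and> a2 \<le> b2 \<and> b2 \<le> real j"
  have "covariance M (\<lambda>\<omega>. ramp a1 b1 (- X i \<omega>)) (\<lambda>\<omega>. ramp a2 b2 (- X j \<omega>)) =
      covariance M (\<lambda>\<omega>. (b1 - a1) + (-1) * ramp (- b1) (- a1) (X i \<omega>))
        (\<lambda>\<omega>. (b2 - a2) + (-1) * ramp (- b2) (- a2) (X j \<omega>))"
    using box by (simp add: ramp_uminus)
  also have "\<dots> = covariance M (\<lambda>\<omega>. ramp (- b1) (- a1) (X i \<omega>)) (\<lambda>\<omega>. ramp (- b2) (- a2) (X j \<omega>))"
    using box covariance_affine[of "\<lambda>\<omega>. ramp (- b1) (- a1) (X i \<omega>)" "\<lambda>\<omega>. ramp (- b2) (- a2) (X j \<omega>)"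
        "b1 - a1" "-1" "b2 - a2" "-1"]
    by (simp add: integrable_ramp integrable_ramp_mult)
  finally show "covariance M (\<lambda>\<omega>. ramp a1 b1 (- X i \<omega>)) (\<lambda>\<omega>. ramp a2 b2 (- X j \<omega>)) \<in> {0..g i j}"
    using assms(1) box unfolding ramp_cov_bounded_def by (metis minus_le_iff neg_le_iff_le)
qed

end

lemma tendsto_cesaro_mean:
  fixes a :: "nat \<Rightarrow> real"
  assumes "a \<longlonglongrightarrow> L"
  shows "(\<lambda>n. (\<Sum>i=1..n. a i) / real n) \<longlonglongrightarrow> L"
proof (rule LIMSEQ_I)
  fix e :: real assume e: "0 < e"
  obtain N0 where N0: "\<And>i. i \<ge> N0 \<Longrightarrow> \<bar>a i - L\<bar> < e / 2"
    using LIMSEQ_D[OF assms, of "e/2"] e by auto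
  define C where "C = (\<Sum>i=1..N0. \<bar>a i - L\<bar>)"
  obtain N1 :: nat where N1: "2 * C / e < real N1"
    using reals_Archimedean2 by blast
  show "\<exists>no. \<forall>n\<ge>no. norm ((\<Sum>i=1..n. a i) / real n - L) < e"
  proof (intro exI allI impI)
    fix n assume n: "n \<ge> max (Suc N0) N1"
    have "{1..n} = {1..N0} \<union> {Suc N0..n}"
      using n by auto
    then have "(\<Sum>i=1..n. a i - L) = (\<Sum>i=1..N0. a i - L) + (\<Sum>i=Suc N0..n. a i - L)"
      by (simp add: sum.union_disjoint)
    moreover have "(\<Sum>i=1..n. a i) / real n - L = (\<Sum>i=1..n. a i - L) / real n"
      using n by (simp add: sum_subtractf field_simps)
    ultimately have split: "(\<Sum>i=1..n. a i) / real n - L =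
        ((\<Sum>i=1..N0. a i - L) + (\<Sum>i=Suc N0..n. a i - L)) / real n"
      by simp
    have "\<bar>\<Sum>i=1..N0. a i - L\<bar> \<le> C"
      unfolding C_def by (rule sum_abs)
    moreover have "\<bar>\<Sum>i=Suc N0..n. a i - L\<bar> \<le> real n * (e / 2)"
    proof -
      have "\<bar>\<Sum>i=Suc N0..n. a i - L\<bar> \<le> (\<Sum>i=Suc N0..n. e / 2)"
        using N0 by (intro order_trans[OF sum_abs] sum_mono) (auto intro: less_imp_le)
      also have "\<dots> \<le> real n * (e / 2)"
        using e by simp
      finally show ?thesis .
    qed
    moreover have "C < real n * (e / 2)"
    proof -
      have "2 * C / e < real n"
        using N1 n by linarith
      then show ?thesis
        using e by (simp add: field_simps)
    qed
    ultimately show "norm ((\<Sum>i=1..n. a i) / real n - L) < e"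
      using n unfolding split by (simp add: field_simps)
  qed
qed

lemma tendsto_mean_diff_if_eventually_eq:
  fixes x y :: "nat \<Rightarrow> real"
  assumes "eventually (\<lambda>n. x n = y n) sequentially"
  shows "(\<lambda>n. ((\<Sum>i=1..n. x i) - (\<Sum>i=1..n. y i)) / real n) \<longlonglongrightarrow> 0"
proof -
  obtain n0 where n0: "\<And>n. n \<ge> n0 \<Longrightarrow> x n = y n"
    using assms unfolding eventually_sequentially by auto
  have "(\<Sum>i=1..n. x i) - (\<Sum>i=1..n. y i) = (\<Sum>i=1..n0. x i - y i)" if "n \<ge> n0" for n
    unfolding sum_subtractf[symmetric] using that n0 by (intro sum.mono_neutral_right) auto
  then have "eventually (\<lambda>n. (\<Sum>i=1..n0. x i - y i) / real n =
      ((\<Sum>i=1..n. x i) - (\<Sum>i=1..n. y i)) / real n) sequentially"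
    by (intro eventually_sequentiallyI[of n0]) simp
  then show ?thesis
    by (rule Lim_transform_eventually[OF lim_const_over_n])
qed

lemma tendsto_term_over_n_if_mean:
  fixes x :: "nat \<Rightarrow> real"
  assumes "(\<lambda>n. (\<Sum>k=1..n. x k) / real n) \<longlonglongrightarrow> 0"
  shows "(\<lambda>n. x n / real n) \<longlonglongrightarrow> 0"
proof -
  let ?A = "\<lambda>n. (\<Sum>k=1..n. x k) / real n"
  have "(real m / real (Suc m)) * ?A m = (\<Sum>k=1..m. x k) / real (Suc m)" for m
    by (cases "m = 0") simp_all
  then have "x (Suc m) / real (Suc m) = ?A (Suc m) - (real m / real (Suc m)) * ?A m" for m
    by (simp add: diff_divide_distrib[symmetric])
  moreover have "(\<lambda>m. ?A (Suc m) - (real m / real (Suc m)) * ?A m) \<longlonglongrightarrow> 0 - 1 * 0"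
    by (intro tendsto_diff tendsto_mult LIMSEQ_Suc[OF assms] assms LIMSEQ_n_over_Suc_n)
  ultimately show ?thesis
    by (simp flip: filterlim_sequentially_Suc[of "\<lambda>n. x n / real n"])
qed

lemma mean_centered_eq_positive_negative_parts:
  fixes x :: "nat \<Rightarrow> real"
  assumes "1 \<le> n"
  shows "(\<Sum>k=1..n. x k - c) / real n =
    (\<Sum>k=1..n. max (x k) 0) / real n - (\<Sum>k=1..n. max (- x k) 0) / real n - c"
proof -
  have "(\<Sum>k=1..n. max (x k) 0) - (\<Sum>k=1..n. max (- x k) 0) = (\<Sum>k=1..n. x k)"
    by (subst sum_subtractf[symmetric]) (rule sum.cong; auto)
  then show ?thesis
    using assms by (simp add: sum_subtractf field_simps)
qed

lemma sum_inverse_square_tail_le: "(\<Sum>i=Suc a..N. 1 / (real i)\<^sup>2) \<le> 2 / (real a + 1)"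
proof (cases "a \<le> N")
  case True
  have "1 / (real i)\<^sup>2 \<le> (- 2 / real (Suc i)) - (- 2 / real i)" if "1 \<le> i" for i
  proof -
    have "1 / (real i)\<^sup>2 = 2 / (2 * (real i)\<^sup>2)"
      by simp
    also have "\<dots> \<le> 2 / (real i * real (Suc i))"
    proof -
      have "real i * real (Suc i) \<le> 2 * (real i)\<^sup>2"
        using that by (simp add: power2_eq_square algebra_simps)
      then show ?thesis
        using that by (intro frac_le) simp_all
    qed
    also have "\<dots> = (- 2 / real (Suc i)) - (- 2 / real i)"
      using that by (simp add: field_simps)
    finally show ?thesis .
  qed
  then have "(\<Sum>i=Suc a..N. 1 / (real i)\<^sup>2) \<le> (\<Sum>i=Suc a..N. (- 2 / real (Suc i)) - (- 2 / real i))"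
    by (intro sum_mono) auto
  also have "\<dots> = 2 / (real a + 1) - 2 / (real N + 1)"
    using True by (subst sum_Suc_diff) (auto simp: add.commute)
  finally show ?thesis
    by (smt (verit) divide_nonneg_nonneg of_nat_0_le_iff)
qed simp

lemma sum_min_square_over_square_le:
  fixes y :: real
  assumes y: "0 \<le> y"
  shows "(\<Sum>i=1..N. (min y (real i))\<^sup>2 / (real i)\<^sup>2) \<le> 3 * y"
proof -
  define a where "a = nat \<lfloor>y\<rfloor>"
  have ay: "real a \<le> y" "y < real a + 1"
    unfolding a_def using y by linarith+
  have "(\<Sum>i=1..N. (min y (real i))\<^sup>2 / (real i)\<^sup>2) \<le> (\<Sum>i=1..N. if i \<le> a then 1 else y\<^sup>2 * (1 / (real i)\<^sup>2))"
    using ay y by (intro sum_mono) (auto simp: divide_le_eq_1 power_mono)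
  also have "\<dots> = (\<Sum>i\<in>{1..N} \<inter> {..a}. 1) + y\<^sup>2 * (\<Sum>i\<in>{1..N} - {..a}. 1 / (real i)\<^sup>2)"
    by (simp add: sum.If_cases sum_distrib_left Diff_eq atMost_def)
  also have "\<dots> \<le> real a + y\<^sup>2 * (2 / (real a + 1))"
  proof (intro add_mono mult_left_mono)
    show "(\<Sum>i\<in>{1..N} \<inter> {..a}. 1) \<le> real a"
      using card_mono[of "{1..a}" "{1..N} \<inter> {..a}"] by auto
    have "{1..N} - {..a} = {Suc a..N}" by auto
    then show "(\<Sum>i\<in>{1..N} - {..a}. 1 / (real i)\<^sup>2) \<le> 2 / (real a + 1)"
      by (simp add: sum_inverse_square_tail_le)
  qed simp
  also have "\<dots> \<le> y + 2 * y"
  proof -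
    have "y * y \<le> y * (real a + 1)"
      using ay y by (intro mult_left_mono) auto
    then have "y\<^sup>2 * (2 / (real a + 1)) \<le> 2 * y"
      by (simp add: field_simps power2_eq_square)
    then show ?thesis
      using ay by simp
  qed
  finally show ?thesis by simp
qed

lemma sum_power_atLeastLessThan_le:
  fixes q :: real
  assumes "0 \<le> q" "q < 1"
  shows "(\<Sum>m=a..<b. q ^ m) \<le> q ^ a / (1 - q)"
proof (cases "a \<le> b")
  case True
  have "(\<Sum>m=a..<b. q ^ m) = q ^ a * (\<Sum>j<b - a. q ^ j)"
    using True by (simp add: sum.atLeastLessThan_shift_0[of _ a b] power_add sum_distrib_left lessThan_atLeast0)
  also have "\<dots> = q ^ a * (1 - q ^ (b - a)) / (1 - q)"
    using assms by (simp add: sum_gp_strict)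
  also have "\<dots> \<le> q ^ a / (1 - q)"
    using assms by (intro divide_right_mono) (auto simp: mult_left_le)
  finally show ?thesis .
qed (use assms in simp)

definition floor_pow :: "real \<Rightarrow> nat \<Rightarrow> nat" where
  "floor_pow \<alpha> m = nat \<lfloor>\<alpha> ^ m\<rfloor>"

lemma floor_pow_bounds:
  assumes "1 \<le> \<alpha>"
  shows "1 \<le> floor_pow \<alpha> m" "real (floor_pow \<alpha> m) \<le> \<alpha> ^ m" "\<alpha> ^ m < real (floor_pow \<alpha> m) + 1"
  using one_le_power[OF assms, of m] unfolding floor_pow_def by (simp_all add: le_nat_iff)

lemma floor_pow_mono: "1 \<le> \<alpha> \<Longrightarrow> m \<le> m' \<Longrightarrow> floor_pow \<alpha> m \<le> floor_pow \<alpha> m'"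
  unfolding floor_pow_def by (intro nat_mono floor_mono power_increasing)

lemma floor_pow_Suc_le: "1 \<le> \<alpha> \<Longrightarrow> real (floor_pow \<alpha> (Suc m)) \<le> \<alpha> * (real (floor_pow \<alpha> m) + 1)"
  using floor_pow_bounds[of \<alpha> "Suc m"] floor_pow_bounds[of \<alpha> m] by (simp add: mult_left_mono order_trans)

lemma filterlim_floor_pow: "1 < \<alpha> \<Longrightarrow> filterlim (floor_pow \<alpha>) at_top sequentially"
  unfolding filterlim_at_top
proof
  fix Z :: nat assume \<alpha>: "1 < \<alpha>"
  obtain n where n: "real Z + 1 < \<alpha> ^ n"
    using real_arch_pow[OF \<alpha>] by blast
  have "Z \<le> floor_pow \<alpha> m" if "n \<le> m" for m
  proof -
    have "\<alpha> ^ n \<le> \<alpha> ^ m"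
      using that \<alpha> by (intro power_increasing) auto
    then have "real Z < real (floor_pow \<alpha> m)"
      using floor_pow_bounds(3)[of \<alpha> m] n \<alpha> by linarith
    then show ?thesis
      by simp
  qed
  then show "eventually (\<lambda>m. Z \<le> floor_pow \<alpha> m) sequentially"
    unfolding eventually_sequentially by blast
qed

lemma floor_pow_bracket:
  assumes "1 < \<alpha>" "floor_pow \<alpha> m0 \<le> N"
  obtains m where "m0 \<le> m" "floor_pow \<alpha> m \<le> N" "N < floor_pow \<alpha> (Suc m)"
proof -
  obtain n where n: "N < floor_pow \<alpha> (m0 + n)"
    using filterlim_floor_pow[OF assms(1)] unfolding filterlim_at_top eventually_sequentially
    by (metis le_add2 less_eq_Suc_le)
  then obtain k where "\<forall>i\<le>k. \<not> N < floor_pow \<alpha> (m0 + i)" "N < floor_pow \<alpha> (m0 + Suc k)"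
    using ex_least_nat_less[of "\<lambda>i. N < floor_pow \<alpha> (m0 + i)" n] assms(2) by auto
  then show ?thesis
    by (intro that[of "m0 + k"]) auto
qed

lemma inverse_square_floor_pow_le:
  assumes "1 \<le> \<alpha>"
  shows "1 / (real (floor_pow \<alpha> m))\<^sup>2 \<le> 4 / (\<alpha> ^ m)\<^sup>2"
proof -
  have "\<alpha> ^ m \<le> 2 * real (floor_pow \<alpha> m)"
    using floor_pow_bounds[OF assms, of m] by linarith
  then have "(\<alpha> ^ m)\<^sup>2 \<le> (2 * real (floor_pow \<alpha> m))\<^sup>2"
    using assms by (intro power_mono) auto
  then show ?thesis
    using floor_pow_bounds(1)[OF assms, of m] assms by (simp add: field_simps)
qed

lemma sum_inverse_square_floor_pow_le:
  assumes \<alpha>: "1 < \<alpha>" and i: "1 \<le> i"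
  shows "(\<Sum>m\<in>{m. m < L \<and> i \<le> floor_pow \<alpha> m}. 1 / (real (floor_pow \<alpha> m))\<^sup>2)
    \<le> 4 * \<alpha>\<^sup>2 / (\<alpha>\<^sup>2 - 1) / (real i)\<^sup>2"
proof -
  define q where "q = 1 / \<alpha>\<^sup>2"
  have q: "0 \<le> q" "q < 1" "q ^ m = 1 / (\<alpha> ^ m)\<^sup>2" for m
    unfolding q_def using \<alpha>
    by (simp_all add: power_less_one_iff power_divide power_mult[symmetric] mult.commute power_even_eq)
  define m0 where "m0 = (LEAST m. real i \<le> \<alpha> ^ m)"
  have m0: "real i \<le> \<alpha> ^ m0"
    unfolding m0_def by (rule LeastI_ex) (use real_arch_pow[OF \<alpha>, of i] in \<open>auto intro: less_imp_le\<close>)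
  have "{m. m < L \<and> i \<le> floor_pow \<alpha> m} \<subseteq> {m0..<L}"
  proof
    fix m assume m: "m \<in> {m. m < L \<and> i \<le> floor_pow \<alpha> m}"
    then have "real i \<le> \<alpha> ^ m"
      using floor_pow_bounds(2)[of \<alpha> m] \<alpha> by (simp add: order_trans)
    then show "m \<in> {m0..<L}"
      using m unfolding m0_def by (auto intro: Least_le)
  qed
  then have "(\<Sum>m\<in>{m. m < L \<and> i \<le> floor_pow \<alpha> m}. 1 / (real (floor_pow \<alpha> m))\<^sup>2)
      \<le> (\<Sum>m=m0..<L. 4 * q ^ m)"
    using q inverse_square_floor_pow_le[of \<alpha>] \<alpha> by (intro order_trans[OF sum_mono sum_mono2]) auto
  also have "\<dots> \<le> 4 * (q ^ m0 / (1 - q))"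
    using sum_power_atLeastLessThan_le[OF q(1,2), of m0 L] by (simp add: sum_distrib_left[symmetric])
  also have "\<dots> \<le> 4 * \<alpha>\<^sup>2 / (\<alpha>\<^sup>2 - 1) / (real i)\<^sup>2"
  proof -
    have "1 < \<alpha>\<^sup>2"
      using \<alpha> by simp
    have "(1 / P) / (1 - 1 / A) = A / (A - 1) * (1 / P)" if "1 < A" for A P :: real
      using that by (simp add: field_simps)
    then have eq: "q ^ m0 / (1 - q) = \<alpha>\<^sup>2 / (\<alpha>\<^sup>2 - 1) * (1 / (\<alpha> ^ m0)\<^sup>2)"
      unfolding q(3) unfolding q_def using \<open>1 < \<alpha>\<^sup>2\<close> by blast
    have "1 / (\<alpha> ^ m0)\<^sup>2 \<le> 1 / (real i)\<^sup>2"
      using m0 i \<alpha> by (intro divide_left_mono power_mono) (auto intro!: mult_pos_pos)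
    then have "4 * (q ^ m0 / (1 - q)) \<le> 4 * (\<alpha>\<^sup>2 / (\<alpha>\<^sup>2 - 1) * (1 / (real i)\<^sup>2))"
      unfolding eq using \<open>1 < \<alpha>\<^sup>2\<close> by (intro mult_left_mono) auto
    then show ?thesis
      by simp
  qed
  finally show ?thesis .
qed

lemma floor_pow_Suc_le_square:
  assumes "1 < \<alpha>" "1 / (\<alpha> - 1) \<le> real (floor_pow \<alpha> m)"
  shows "real (floor_pow \<alpha> (Suc m)) \<le> \<alpha>\<^sup>2 * real (floor_pow \<alpha> m)"
proof -
  have "real (floor_pow \<alpha> m) + 1 \<le> \<alpha> * real (floor_pow \<alpha> m)"
    using assms by (simp add: field_simps)
  then have "\<alpha> * (real (floor_pow \<alpha> m) + 1) \<le> \<alpha> * (\<alpha> * real (floor_pow \<alpha> m))"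
    using assms by (intro mult_left_mono) auto
  moreover have "real (floor_pow \<alpha> (Suc m)) \<le> \<alpha> * (real (floor_pow \<alpha> m) + 1)"
    using floor_pow_Suc_le assms by simp
  ultimately show ?thesis
    by (simp add: power2_eq_square mult.assoc)
qed

lemma mono_ratio_bracket:
  fixes s :: "nat \<Rightarrow> real"
  assumes "mono s" "\<And>N. 0 \<le> s N" "0 < a" "a \<le> N" "N \<le> b"
  shows "s a / real a * (real a / real b) \<le> s N / real N"
    and "s N / real N \<le> s b / real b * (real b / real a)"
  using assms by (simp_all add: frac_le monoD)

lemma ratio_bounds_in_bracket:
  fixes s :: "nat \<Rightarrow> real"
  assumes mono: "mono s" and nonneg: "\<And>N. 0 \<le> s N" and \<alpha>: "1 < \<alpha>"
    and bracket: "0 < a" "a \<le> N" "N \<le> b" "real b \<le> \<alpha>\<^sup>2 * real a"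
    and close: "\<bar>s a / real a - \<mu>\<bar> < e" "\<bar>s b / real b - \<mu>\<bar> < e"
  shows "(\<mu> - e) / \<alpha>\<^sup>2 \<le> s N / real N \<and> s N / real N \<le> \<alpha>\<^sup>2 * (\<mu> + e)"
proof
  have "s N / real N \<le> s b / real b * (real b / real a)"
    by (rule mono_ratio_bracket(2)[OF mono nonneg bracket(1-3)])
  also have "\<dots> \<le> (\<mu> + e) * \<alpha>\<^sup>2"
  proof (rule mult_mono)
    show upper: "s b / real b \<le> \<mu> + e"
      using close(2) by (auto simp: abs_less_iff)
    show "0 \<le> \<mu> + e"
      using upper nonneg[of b] by (smt (verit) divide_nonneg_nonneg of_nat_0_le_iff)
  qed (use bracket in \<open>auto simp: field_simps\<close>)
  finally show "s N / real N \<le> \<alpha>\<^sup>2 * (\<mu> + e)"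
    by (simp add: mult.commute)
  have "(\<mu> - e) / \<alpha>\<^sup>2 \<le> s a / real a * (real a / real b)"
  proof (cases "\<mu> - e \<le> 0")
    case True
    then have "(\<mu> - e) / \<alpha>\<^sup>2 \<le> 0"
      by (simp add: divide_nonpos_nonneg)
    also have "0 \<le> s a / real a * (real a / real b)"
      using nonneg by simp
    finally show ?thesis .
  next
    case False
    have "1 / \<alpha>\<^sup>2 \<le> real a / real b"
      using bracket \<alpha> by (simp add: field_simps)
    then have "(\<mu> - e) * (1 / \<alpha>\<^sup>2) \<le> s a / real a * (real a / real b)"
      using close(1) False by (intro mult_mono) auto
    then show ?thesis
      by simp
  qed
  also have "\<dots> \<le> s N / real N"
    by (rule mono_ratio_bracket(1)[OF mono nonneg bracket(1-3)])
  finally show "(\<mu> - e) / \<alpha>\<^sup>2 \<le> s N / real N" .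
qed

lemma floor_pow_ratio_bounds:
  fixes s :: "nat \<Rightarrow> real"
  assumes \<alpha>: "1 < \<alpha>" and mono: "mono s" and nonneg: "\<And>N. 0 \<le> s N"
    and lim: "(\<lambda>m. s (floor_pow \<alpha> m) / real (floor_pow \<alpha> m)) \<longlonglongrightarrow> \<mu>" and e: "0 < e"
  shows "eventually (\<lambda>N. (\<mu> - e) / \<alpha>\<^sup>2 \<le> s N / real N \<and> s N / real N \<le> \<alpha>\<^sup>2 * (\<mu> + e)) sequentially"
proof -
  let ?k = "floor_pow \<alpha>"
  have "filterlim (\<lambda>m. real (?k m)) at_top sequentially"
    by (rule filterlim_compose[OF filterlim_real_sequentially filterlim_floor_pow[OF \<alpha>]])
  then have "eventually (\<lambda>m. \<bar>s (?k m) / ?k m - \<mu>\<bar> < e \<and> 1 / (\<alpha> - 1) \<le> real (?k m)) sequentially"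
    using tendstoD[OF lim e] by (auto simp: dist_real_def filterlim_at_top elim: eventually_elim2)
  then obtain m0 where m0: "\<And>m. m \<ge> m0 \<Longrightarrow> \<bar>s (?k m) / ?k m - \<mu>\<bar> < e \<and> 1 / (\<alpha> - 1) \<le> real (?k m)"
    unfolding eventually_sequentially by blast
  show ?thesis
  proof (rule eventually_sequentiallyI[of "?k m0"])
    fix N assume "?k m0 \<le> N"
    then obtain m where m: "m0 \<le> m" "?k m \<le> N" "N < ?k (Suc m)"
      using floor_pow_bracket[OF \<alpha>] by blast
    show "(\<mu> - e) / \<alpha>\<^sup>2 \<le> s N / real N \<and> s N / real N \<le> \<alpha>\<^sup>2 * (\<mu> + e)"
    proof (rule ratio_bounds_in_bracket[OF mono nonneg \<alpha>])
      show "0 < ?k m"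
        using floor_pow_bounds(1)[of \<alpha> m] \<alpha> by simp
      show "real (?k (Suc m)) \<le> \<alpha>\<^sup>2 * real (?k m)"
        using floor_pow_Suc_le_square[OF \<alpha>] m0 m(1) by blast
    qed (use m m0 in auto)
  qed
qed

lemma tendsto_ratio_if_floor_pow:
  fixes s :: "nat \<Rightarrow> real"
  assumes "mono s" "\<And>N. 0 \<le> s N"
    and \<alpha>: "\<alpha> \<longlonglongrightarrow> 1" "\<And>r. 1 < \<alpha> r"
    and "\<And>r. (\<lambda>m. s (floor_pow (\<alpha> r) m) / real (floor_pow (\<alpha> r) m)) \<longlonglongrightarrow> \<mu>"
  shows "(\<lambda>N. s N / real N) \<longlonglongrightarrow> \<mu>"
proof (rule tendstoI)
  fix e :: real assume e: "0 < e"
  have "(\<lambda>r. (\<alpha> r)\<^sup>2 * (\<mu> + e / 2)) \<longlonglongrightarrow> 1\<^sup>2 * (\<mu> + e / 2)"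
    "(\<lambda>r. (\<mu> - e / 2) / (\<alpha> r)\<^sup>2) \<longlonglongrightarrow> (\<mu> - e / 2) / 1\<^sup>2"
    by (intro tendsto_mult tendsto_divide tendsto_power tendsto_const \<alpha>(1); simp)+
  then have "eventually (\<lambda>r. (\<alpha> r)\<^sup>2 * (\<mu> + e / 2) < \<mu> + e \<and> \<mu> - e < (\<mu> - e / 2) / (\<alpha> r)\<^sup>2) sequentially"
    using e by (intro eventually_conj order_tendstoD) auto
  then obtain r where r: "(\<alpha> r)\<^sup>2 * (\<mu> + e / 2) < \<mu> + e" "\<mu> - e < (\<mu> - e / 2) / (\<alpha> r)\<^sup>2"
    using eventually_happens[of _ sequentially] by auto
  have "eventually (\<lambda>N. (\<mu> - e / 2) / (\<alpha> r)\<^sup>2 \<le> s N / real N \<and> s N / real N \<le> (\<alpha> r)\<^sup>2 * (\<mu> + e / 2))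
      sequentially"
    using e by (intro floor_pow_ratio_bounds assms) auto
  then show "eventually (\<lambda>N. dist (s N / real N) \<mu> < e) sequentially"
    by eventually_elim (use r in \<open>auto simp: dist_real_def\<close>)
qed

lemma sum_floor_pow_weighted_le:
  fixes h :: "'b \<Rightarrow> real" and level :: "'b \<Rightarrow> nat"
  assumes \<alpha>: "1 < \<alpha>" and B: "finite B" "\<And>x. x \<in> B \<Longrightarrow> 0 \<le> h x \<and> 1 \<le> level x"
  shows "(\<Sum>m<L. (\<Sum>x\<in>{x\<in>B. level x \<le> floor_pow \<alpha> m}. h x) / (real (floor_pow \<alpha> m))\<^sup>2)
    \<le> 4 * \<alpha>\<^sup>2 / (\<alpha>\<^sup>2 - 1) * (\<Sum>x\<in>B. h x / (real (level x))\<^sup>2)"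
proof -
  define D where "D = 4 * \<alpha>\<^sup>2 / (\<alpha>\<^sup>2 - 1)"
  have "(\<Sum>m<L. (\<Sum>x\<in>{x\<in>B. level x \<le> floor_pow \<alpha> m}. h x) / (real (floor_pow \<alpha> m))\<^sup>2) =
      (\<Sum>x\<in>B. h x * (\<Sum>m\<in>{m. m < L \<and> level x \<le> floor_pow \<alpha> m}. 1 / (real (floor_pow \<alpha> m))\<^sup>2))"
    using sum.swap_restrict[OF finite_lessThan B(1),
        of "\<lambda>m x. h x / (real (floor_pow \<alpha> m))\<^sup>2" "\<lambda>m x. level x \<le> floor_pow \<alpha> m" L]
    by (simp add: sum_divide_distrib sum_distrib_left)
  also have "\<dots> \<le> (\<Sum>x\<in>B. h x * (D / (real (level x))\<^sup>2))"
    using B(2) unfolding D_def by (intro sum_mono mult_left_mono sum_inverse_square_floor_pow_le \<alpha>) auto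
  also have "\<dots> = D * (\<Sum>x\<in>B. h x / (real (level x))\<^sup>2)"
    by (simp add: sum_distrib_left ac_simps)
  finally show ?thesis
    unfolding D_def .
qed

lemma sum_floor_pow_diag_le:
  assumes \<alpha>: "1 < \<alpha>" and nonneg: "\<And>i. 0 \<le> e i"
    and bounded: "\<And>N. (\<Sum>i=1..N. e i / (real i)\<^sup>2) \<le> E"
  shows "(\<Sum>m<L. (\<Sum>i=1..floor_pow \<alpha> m. e i) / (real (floor_pow \<alpha> m))\<^sup>2) \<le> 4 * \<alpha>\<^sup>2 / (\<alpha>\<^sup>2 - 1) * E"
proof -
  let ?k = "floor_pow \<alpha>"
  have "{i\<in>{1..?k L}. i \<le> ?k m} = {1..?k m}" if "m < L" for m
    using floor_pow_mono[of \<alpha> m L] that \<alpha> by auto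
  then have "(\<Sum>m<L. (\<Sum>i=1..?k m. e i) / (real (?k m))\<^sup>2) =
      (\<Sum>m<L. (\<Sum>i\<in>{i\<in>{1..?k L}. i \<le> ?k m}. e i) / (real (?k m))\<^sup>2)"
    by (intro sum.cong) auto
  also have "\<dots> \<le> 4 * \<alpha>\<^sup>2 / (\<alpha>\<^sup>2 - 1) * (\<Sum>i=1..?k L. e i / (real i)\<^sup>2)"
    using nonneg by (intro sum_floor_pow_weighted_le \<alpha>) auto
  also have "\<dots> \<le> 4 * \<alpha>\<^sup>2 / (\<alpha>\<^sup>2 - 1) * E"
    using bounded \<alpha> by (intro mult_left_mono) auto
  finally show ?thesis .
qed

lemma sum_floor_pow_pairs_le:
  fixes c :: "nat \<Rightarrow> nat \<Rightarrow> real"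
  assumes \<alpha>: "1 < \<alpha>" and nonneg: "\<And>i j. 1 \<le> i \<Longrightarrow> i < j \<Longrightarrow> 0 \<le> c i j"
    and bounded: "\<And>F. finite F \<Longrightarrow> F \<subseteq> {(i, j). 1 \<le> i \<and> i < j} \<Longrightarrow>
      (\<Sum>(i, j)\<in>F. c i j / (real i * real j)) \<le> C"
  shows "(\<Sum>m<L. (\<Sum>(i, j)\<in>{(i, j). 1 \<le> i \<and> i < j \<and> j \<le> floor_pow \<alpha> m}. c i j) / (real (floor_pow \<alpha> m))\<^sup>2)
    \<le> 4 * \<alpha>\<^sup>2 / (\<alpha>\<^sup>2 - 1) * C"
proof -
  let ?k = "floor_pow \<alpha>" and ?U = "\<lambda>N. {(i, j). 1 \<le> i \<and> i < j \<and> j \<le> N}"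
  have finite_U: "finite (?U N)" for N :: nat
    by (rule finite_subset[of _ "{..N} \<times> {..N}"]) auto
  have "{p\<in>?U (?k L). snd p \<le> ?k m} = ?U (?k m)" if "m < L" for m
    using floor_pow_mono[of \<alpha> m L] that \<alpha> by auto
  then have "(\<Sum>m<L. (\<Sum>(i, j)\<in>?U (?k m). c i j) / (real (?k m))\<^sup>2) =
      (\<Sum>m<L. (\<Sum>p\<in>{p\<in>?U (?k L). snd p \<le> ?k m}. case p of (i, j) \<Rightarrow> c i j) / (real (?k m))\<^sup>2)"
    by (intro sum.cong) auto
  also have "\<dots> \<le> 4 * \<alpha>\<^sup>2 / (\<alpha>\<^sup>2 - 1) * (\<Sum>p\<in>?U (?k L). (case p of (i, j) \<Rightarrow> c i j) / (real (snd p))\<^sup>2)"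
    using nonneg by (intro sum_floor_pow_weighted_le \<alpha> finite_U) auto
  also have "\<dots> \<le> 4 * \<alpha>\<^sup>2 / (\<alpha>\<^sup>2 - 1) * (\<Sum>(i, j)\<in>?U (?k L). c i j / (real i * real j))"
  proof (intro mult_left_mono sum_mono)
    fix p assume "p \<in> ?U (?k L)"
    then obtain i j where "p = (i, j)" "1 \<le> i" "i < j"
      by auto
    then show "(case p of (i, j) \<Rightarrow> c i j) / (real (snd p))\<^sup>2 \<le> (case p of (i, j) \<Rightarrow> c i j / (real i * real j))"
      using nonneg[of i j] by (auto simp: power2_eq_square intro!: divide_left_mono mult_right_mono)
  qed (use \<alpha> in simp)
  also have "\<dots> \<le> 4 * \<alpha>\<^sup>2 / (\<alpha>\<^sup>2 - 1) * C"
    using bounded[OF finite_U] \<alpha> by (intro mult_left_mono) auto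
  finally show ?thesis .
qed

lemma tendsto_div_square_at_top:
  fixes s :: "nat \<Rightarrow> real"
  assumes "filterlim s at_top sequentially"
  shows "(\<lambda>N. (s N + c) / (s N - b)\<^sup>2) \<longlonglongrightarrow> 0"
proof -
  have "filterlim (\<lambda>N. s N - b) at_top sequentially"
    using filterlim_tendsto_add_at_top[OF tendsto_const[of "- b"] assms] by simp
  then have "(\<lambda>N. inverse (s N - b) * (1 + (b + c) * inverse (s N - b))) \<longlonglongrightarrow> 0 * (1 + (b + c) * 0)"
    by (intro tendsto_intros tendsto_inverse_0_at_top)
  moreover have "eventually (\<lambda>N. b < s N) sequentially"
    using assms by (simp add: filterlim_at_top_dense)
  then have "eventually (\<lambda>N. inverse (s N - b) * (1 + (b + c) * inverse (s N - b)) = (s N + c) / (s N - b)\<^sup>2)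
      sequentially"
    by (rule eventually_mono) (simp add: field_simps power2_eq_square)
  ultimately show ?thesis
    by (simp add: Lim_transform_eventually)
qed

lemma tendsto_mean_if_floor_pow:
  fixes y t e :: "nat \<Rightarrow> real"
  assumes nonneg: "\<And>n. 0 \<le> y n" and eq: "eventually (\<lambda>n. y n = t n) sequentially"
    and mean_e: "(\<lambda>N. (\<Sum>i=1..N. e i) / real N) \<longlonglongrightarrow> \<mu>"
    and \<alpha>: "\<alpha> \<longlonglongrightarrow> 1" "\<And>r. 1 < \<alpha> r"
    and along: "\<And>r. (\<lambda>m. ((\<Sum>i=1..floor_pow (\<alpha> r) m. t i) - (\<Sum>i=1..floor_pow (\<alpha> r) m. e i))
      / real (floor_pow (\<alpha> r) m)) \<longlonglongrightarrow> 0"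
  shows "(\<lambda>N. (\<Sum>i=1..N. y i) / real N) \<longlonglongrightarrow> \<mu>"
proof (rule tendsto_ratio_if_floor_pow[OF _ _ \<alpha>])
  show "mono (\<lambda>N. \<Sum>i=1..N. y i)"
    using nonneg by (intro monoI sum_mono2) auto
  show "0 \<le> (\<Sum>i=1..N. y i)" for N
    using nonneg by (simp add: sum_nonneg)
  fix r
  let ?k = "floor_pow (\<alpha> r)"
  have k: "filterlim ?k at_top sequentially"
    by (rule filterlim_floor_pow[OF \<alpha>(2)])
  have "(\<lambda>m. ((\<Sum>i=1..?k m. y i) - (\<Sum>i=1..?k m. t i)) / real (?k m)
      + ((\<Sum>i=1..?k m. t i) - (\<Sum>i=1..?k m. e i)) / real (?k m)
      + (\<Sum>i=1..?k m. e i) / real (?k m)) \<longlonglongrightarrow> 0 + 0 + \<mu>"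
    by (intro tendsto_add filterlim_compose[OF tendsto_mean_diff_if_eventually_eq[OF eq] k]
        filterlim_compose[OF mean_e k] along)
  then show "(\<lambda>m. (\<Sum>i=1..?k m. y i) / real (?k m)) \<longlonglongrightarrow> \<mu>"
    by (simp add: diff_divide_distrib)
qed

lemma sum_square_symmetric:
  fixes c :: "'b::linorder \<Rightarrow> 'b \<Rightarrow> real"
  assumes "finite I" "\<And>i j. c i j = c j i"
  shows "(\<Sum>i\<in>I. \<Sum>j\<in>I. c i j) = (\<Sum>i\<in>I. c i i) + 2 * (\<Sum>(i, j)\<in>{(i, j)\<in>I \<times> I. i < j}. c i j)"
proof -
  let ?D = "{p\<in>I \<times> I. fst p = snd p}" and ?U = "{p\<in>I \<times> I. fst p < snd p}"
    and ?L = "{p\<in>I \<times> I. snd p < fst p}"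
  have "(\<Sum>(i, j)\<in>I \<times> I. c i j) = (\<Sum>(i, j)\<in>?D \<union> (?U \<union> ?L). c i j)"
    by (rule sum.cong) auto
  also have "\<dots> = (\<Sum>(i, j)\<in>?D. c i j) + ((\<Sum>(i, j)\<in>?U. c i j) + (\<Sum>(i, j)\<in>?L. c i j))"
    using assms(1) by (subst sum.union_disjoint, auto, subst sum.union_disjoint, auto)
  finally have "(\<Sum>(i, j)\<in>I \<times> I. c i j) =
      (\<Sum>(i, j)\<in>?D. c i j) + ((\<Sum>(i, j)\<in>?U. c i j) + (\<Sum>(i, j)\<in>?L. c i j))" .
  moreover have "?D = (\<lambda>i. (i, i)) ` I" "?L = prod.swap ` ?U" "{(i, j)\<in>I \<times> I. i < j} = ?U"
    by (auto simp: image_iff)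
  moreover have "(\<Sum>(i, j)\<in>prod.swap ` ?U. c i j) = (\<Sum>(i, j)\<in>?U. c i j)"
    using assms(2) by (subst sum.reindex) (auto simp: case_prod_beta)
  ultimately show ?thesis
    by (simp add: sum.cartesian_product sum.reindex inj_on_def case_prod_beta)
qed

lemma sum_of_bool_Suc_less_le: "0 \<le> y \<Longrightarrow> (\<Sum>n<N. of_bool (real (Suc n) < y)) \<le> min (real N) y"
  by (induction N) (auto simp: min_def split: if_splits)

lemma min_le_sum_of_bool_Suc_less: "min y (real N + 1) \<le> 1 + (\<Sum>n<N. of_bool (real (Suc n) < y))"
  by (induction N) (auto simp: min_def split: if_splits)

section \<open>Etemadi's strong law for nonnegative variables\<close>

context prob_space
begin

lemma variance_sum:
  assumes "finite I" and [measurable]: "\<And>i. i \<in> I \<Longrightarrow> f i \<in> borel_measurable M"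
    and bounded: "\<And>i x. i \<in> I \<Longrightarrow> x \<in> space M \<Longrightarrow> \<bar>f i x\<bar> \<le> B"
  shows "variance (\<lambda>x. \<Sum>i\<in>I. f i x) = (\<Sum>i\<in>I. \<Sum>j\<in>I. covariance M (f i) (f j))"
proof -
  let ?e = "\<lambda>i. expectation (f i)"
  have int: "integrable M (f i)" if "i \<in> I" for i
    using that bounded by (intro integrable_bounded[where B=B]) auto
  have int_mult: "integrable M (\<lambda>x. f i x * f j x)" if "i \<in> I" "j \<in> I" for i j
    using that bounded[of i] bounded[of j]
    by (intro integrable_bounded[where B="B * B"]) (auto simp: abs_mult intro: mult_mono')
  have "variance (\<lambda>x. \<Sum>i\<in>I. f i x) = expectation (\<lambda>x. (\<Sum>i\<in>I. f i x - ?e i)\<^sup>2)"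
    using int by (simp add: Bochner_Integration.integral_sum sum_subtractf)
  also have "\<dots> = expectation (\<lambda>x. \<Sum>i\<in>I. \<Sum>j\<in>I. (f i x - ?e i) * (f j x - ?e j))"
    by (simp add: power2_eq_square sum_product)
  also have "\<dots> = (\<Sum>i\<in>I. \<Sum>j\<in>I. expectation (\<lambda>x. f i x * f j x - ?e j * f i x - ?e i * f j x + ?e i * ?e j))"
    using int int_mult by (simp add: Bochner_Integration.integral_sum algebra_simps)
  also have "\<dots> = (\<Sum>i\<in>I. \<Sum>j\<in>I. covariance M (f i) (f j))"
    using int int_mult by (intro sum.cong refl) (simp add: covariance_def prob_space)
  finally show ?thesis .
qed

lemma variance_sum_le:
  fixes f :: "nat \<Rightarrow> 'a \<Rightarrow> real"
  assumes [measurable]: "\<And>i. f i \<in> borel_measurable M"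
    and bounded: "\<And>i x. i \<le> N \<Longrightarrow> x \<in> space M \<Longrightarrow> \<bar>f i x\<bar> \<le> B"
  shows "variance (\<lambda>x. \<Sum>i=1..N. f i x) \<le> (\<Sum>i=1..N. expectation (\<lambda>x. (f i x)\<^sup>2))
    + 2 * (\<Sum>(i, j)\<in>{(i, j). 1 \<le> i \<and> i < j \<and> j \<le> N}. covariance M (f i) (f j))"
proof -
  have "{(i, j)\<in>{1..N} \<times> {1..N}. i < j} = {(i, j). 1 \<le> i \<and> i < j \<and> j \<le> N}"
    by auto
  moreover have "variance (\<lambda>x. \<Sum>i=1..N. f i x) = (\<Sum>i\<in>{1..N}. \<Sum>j\<in>{1..N}. covariance M (f i) (f j))"
    using bounded by (intro variance_sum[where B=B]) auto
  ultimately have "variance (\<lambda>x. \<Sum>i=1..N. f i x) = (\<Sum>i=1..N. covariance M (f i) (f i))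
      + 2 * (\<Sum>(i, j)\<in>{(i, j). 1 \<le> i \<and> i < j \<and> j \<le> N}. covariance M (f i) (f j))"
    by (simp add: sum_square_symmetric covariance_def mult.commute)
  moreover have "covariance M (f i) (f i) \<le> expectation (\<lambda>x. (f i x)\<^sup>2)" for i
    by (simp add: covariance_def power2_eq_square)
  ultimately show ?thesis
    by (simp add: sum_mono)
qed

lemma AE_tendsto_zero_if_summable_variance:
  fixes S :: "nat \<Rightarrow> 'a \<Rightarrow> real"
  assumes [measurable]: "\<And>m. S m \<in> borel_measurable M"
    and square_int: "\<And>m. integrable M (\<lambda>\<omega>. (S m \<omega>)\<^sup>2)" and b: "\<And>m. 0 < b m"
    and summable: "summable (\<lambda>m. variance (S m) / (b m)\<^sup>2)"
  shows "AE \<omega> in M. (\<lambda>m. (S m \<omega> - expectation (S m)) / b m) \<longlonglongrightarrow> 0"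
proof -
  have "AE \<omega> in M. eventually (\<lambda>m. \<bar>S m \<omega> - expectation (S m)\<bar> < b m / Suc q) sequentially" for q
  proof -
    define A where "A m = {\<omega>\<in>space M. b m / Suc q \<le> \<bar>S m \<omega> - expectation (S m)\<bar>}" for m
    have [measurable]: "A m \<in> events" for m
      unfolding A_def by measurable
    have "prob (A m) \<le> (Suc q)\<^sup>2 * (variance (S m) / (b m)\<^sup>2)" for m
      using Chebyshev_inequality[of "S m" "b m / Suc q"] square_int b[of m]
      by (simp add: A_def power_divide field_simps)
    then have "summable (\<lambda>m. prob (A m))"
      by (intro summable_comparison_test'[OF summable_mult[OF summable]]) auto
    then have "AE \<omega> in M. eventually (\<lambda>m. \<omega> \<in> space M - A m) sequentially"
      by (intro borel_cantelli_AE1) (auto simp: emeasure_eq_measure)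
    then show ?thesis
      by (rule eventually_mono) (auto elim!: eventually_mono simp: A_def not_le)
  qed
  then have "AE \<omega> in M. \<forall>q. eventually (\<lambda>m. \<bar>S m \<omega> - expectation (S m)\<bar> < b m / Suc q) sequentially"
    by (simp add: AE_all_countable)
  then show ?thesis
  proof (rule eventually_mono, intro tendstoI)
    fix \<omega> and r :: real
    assume H: "\<forall>q. eventually (\<lambda>m. \<bar>S m \<omega> - expectation (S m)\<bar> < b m / Suc q) sequentially"
      and "0 < r"
    then obtain q where q: "1 / Suc q < r"
      using reals_Archimedean by (auto simp: inverse_eq_divide)
    from H have "eventually (\<lambda>m. \<bar>S m \<omega> - expectation (S m)\<bar> < b m / Suc q) sequentially" ..
    then show "eventually (\<lambda>m. dist ((S m \<omega> - expectation (S m)) / b m) 0 < r) sequentially"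
    proof (rule eventually_mono)
      fix m assume "\<bar>S m \<omega> - expectation (S m)\<bar> < b m / Suc q"
      then have "\<bar>S m \<omega> - expectation (S m)\<bar> / b m < 1 / Suc q"
        using b[of m] by (simp add: field_simps)
      then show "dist ((S m \<omega> - expectation (S m)) / b m) 0 < r"
        using q b[of m] by (simp add: dist_real_def abs_divide)
    qed
  qed
qed

lemma distr_comp_eq:
  fixes X Y :: "'a \<Rightarrow> real" and f :: "real \<Rightarrow> real"
  assumes [measurable]: "X \<in> borel_measurable M" "Y \<in> borel_measurable M" "f \<in> borel_measurable borel"
    and "distr M borel X = distr M borel Y"
  shows "distr M borel (\<lambda>\<omega>. f (X \<omega>)) = distr M borel (\<lambda>\<omega>. f (Y \<omega>))"
  using distr_distr[of f borel borel X M] distr_distr[of f borel borel Y M] assms(4)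
  by (simp add: comp_def)

lemma prob_eq_if_distr_eq:
  fixes X Y :: "'a \<Rightarrow> real"
  assumes [measurable]: "X \<in> borel_measurable M" "Y \<in> borel_measurable M" "A \<in> sets borel"
    and "distr M borel X = distr M borel Y"
  shows "prob {\<omega>\<in>space M. X \<omega> \<in> A} = prob {\<omega>\<in>space M. Y \<omega> \<in> A}"
  using measure_distr[of X M borel A] measure_distr[of Y M borel A] assms(4)
  by (simp add: vimage_def Int_def conj_commute)

lemma expectation_eq_if_distr_eq:
  fixes X Y :: "'a \<Rightarrow> real" and f :: "real \<Rightarrow> real"
  assumes [measurable]: "X \<in> borel_measurable M" "Y \<in> borel_measurable M" "f \<in> borel_measurable borel"
    and "distr M borel X = distr M borel Y"
  shows "expectation (\<lambda>\<omega>. f (X \<omega>)) = expectation (\<lambda>\<omega>. f (Y \<omega>))"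
  using integral_distr[of X M borel f] integral_distr[of Y M borel f] assms(4) by simp

lemma sum_prob_gt_le_expectation:
  assumes [measurable]: "Y \<in> borel_measurable M"
    and nonneg: "\<And>\<omega>. \<omega> \<in> space M \<Longrightarrow> 0 \<le> Y \<omega>" and "integrable M Y"
  shows "(\<Sum>n<N. prob {\<omega>\<in>space M. real (Suc n) < Y \<omega>}) \<le> expectation Y"
proof -
  have events: "{\<omega>\<in>space M. real (Suc n) < Y \<omega>} \<in> events" for n
    by measurable
  have "(\<Sum>n<N. prob {\<omega>\<in>space M. real (Suc n) < Y \<omega>}) =
      expectation (\<lambda>\<omega>. \<Sum>n<N. indicator {\<omega>\<in>space M. real (Suc n) < Y \<omega>} \<omega>)"
    using events by (subst Bochner_Integration.integral_sum) (auto simp: emeasure_eq_measure)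
  also have "\<dots> \<le> expectation Y"
  proof (intro integral_mono)
    fix \<omega> assume "\<omega> \<in> space M"
    then show "(\<Sum>n<N. indicator {\<omega>\<in>space M. real (Suc n) < Y \<omega>} \<omega>) \<le> Y \<omega>"
      using sum_of_bool_Suc_less_le[of "Y \<omega>" N] nonneg by (simp add: indicator_def of_bool_def)
  qed (use assms events in \<open>auto simp: emeasure_eq_measure\<close>)
  finally show ?thesis .
qed

lemma AE_eventually_truncation_eq:
  fixes Y :: "nat \<Rightarrow> 'a \<Rightarrow> real"
  assumes [measurable]: "\<And>n. Y n \<in> borel_measurable M" and nonneg: "\<And>n \<omega>. \<omega> \<in> space M \<Longrightarrow> 0 \<le> Y n \<omega>"
    and ident: "\<And>n. distr M borel (Y n) = distr M borel (Y 1)" and "integrable M (Y 1)"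
  shows "AE \<omega> in M. eventually (\<lambda>n. Y n \<omega> = min (Y n \<omega>) (real n)) sequentially"
proof -
  define A where "A n = {\<omega>\<in>space M. real (Suc n) < Y (Suc n) \<omega>}" for n
  have [measurable]: "A n \<in> events" for n
    unfolding A_def by measurable
  have "prob (A n) = prob {\<omega>\<in>space M. real (Suc n) < Y 1 \<omega>}" for n
    using prob_eq_if_distr_eq[of "Y (Suc n)" "Y 1" "{real (Suc n)<..}"] ident by (simp add: A_def)
  then have "summable (\<lambda>n. prob (A n))"
    using sum_prob_gt_le_expectation[of "Y 1"] nonneg assms(4)
    by (intro summableI_nonneg_bounded[where x="expectation (Y 1)"]) auto
  then have "AE \<omega> in M. eventually (\<lambda>n. \<omega> \<in> space M - A n) sequentially"
    by (intro borel_cantelli_AE1) (auto simp: emeasure_eq_measure)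
  then show ?thesis
  proof (rule eventually_mono)
    fix \<omega> assume "eventually (\<lambda>n. \<omega> \<in> space M - A n) sequentially"
    then have "eventually (\<lambda>n. Y (Suc n) \<omega> = min (Y (Suc n) \<omega>) (real (Suc n))) sequentially"
      by (rule eventually_mono) (auto simp: A_def)
    then show "eventually (\<lambda>n. Y n \<omega> = min (Y n \<omega>) (real n)) sequentially"
      by (rule eventually_sequentially_Suc[THEN iffD1])
  qed
qed

lemma tendsto_expectation_min:
  assumes [measurable]: "Y \<in> borel_measurable M"
    and "integrable M Y" "\<And>\<omega>. \<omega> \<in> space M \<Longrightarrow> 0 \<le> Y \<omega>"
  shows "(\<lambda>n. expectation (\<lambda>\<omega>. min (Y \<omega>) (real n))) \<longlonglongrightarrow> expectation Y"
proof (rule integral_dominated_convergence[where w=Y])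
  show "AE \<omega> in M. (\<lambda>n. min (Y \<omega>) (real n)) \<longlonglongrightarrow> Y \<omega>"
  proof (rule AE_I2)
    fix \<omega>
    obtain n0 :: nat where "Y \<omega> \<le> real n0"
      using real_arch_simple by blast
    then have "eventually (\<lambda>n. min (Y \<omega>) (real n) = Y \<omega>) sequentially"
      by (intro eventually_sequentiallyI[of n0]) auto
    then show "(\<lambda>n. min (Y \<omega>) (real n)) \<longlonglongrightarrow> Y \<omega>"
      by (rule tendsto_eventually)
  qed
qed (use assms in \<open>auto intro!: AE_I2\<close>)

lemma sum_truncated_second_moment_le:
  assumes [measurable]: "Y \<in> borel_measurable M"
    and nonneg: "\<And>\<omega>. \<omega> \<in> space M \<Longrightarrow> 0 \<le> Y \<omega>" and "integrable M Y"
  shows "(\<Sum>i=1..N. expectation (\<lambda>\<omega>. (min (Y \<omega>) (real i))\<^sup>2) / (real i)\<^sup>2) \<le> 3 * expectation Y"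
proof -
  have int: "integrable M (\<lambda>\<omega>. (min (Y \<omega>) (real i))\<^sup>2 / (real i)\<^sup>2)" for i
  proof (rule integrable_bounded[where B=1])
    fix \<omega> assume "\<omega> \<in> space M"
    then have "(min (Y \<omega>) (real i))\<^sup>2 \<le> (real i)\<^sup>2"
      using nonneg by (intro power_mono) auto
    then show "\<bar>(min (Y \<omega>) (real i))\<^sup>2 / (real i)\<^sup>2\<bar> \<le> 1"
      by (cases "i = 0") (auto simp: divide_le_eq_1)
  qed simp
  have "(\<Sum>i=1..N. expectation (\<lambda>\<omega>. (min (Y \<omega>) (real i))\<^sup>2) / (real i)\<^sup>2) =
      expectation (\<lambda>\<omega>. \<Sum>i=1..N. (min (Y \<omega>) (real i))\<^sup>2 / (real i)\<^sup>2)"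
    using int by (simp add: Bochner_Integration.integral_sum)
  also have "\<dots> \<le> expectation (\<lambda>\<omega>. 3 * Y \<omega>)"
    using int assms sum_min_square_over_square_le by (intro integral_mono) auto
  finally show ?thesis
    by simp
qed

lemma summable_variance_floor_pow:
  fixes T :: "nat \<Rightarrow> 'a \<Rightarrow> real"
  assumes [measurable]: "\<And>i. T i \<in> borel_measurable M"
    and bounded: "\<And>i \<omega>. \<omega> \<in> space M \<Longrightarrow> 0 \<le> T i \<omega> \<and> T i \<omega> \<le> real i"
    and second_moments: "\<And>N. (\<Sum>i=1..N. expectation (\<lambda>\<omega>. (T i \<omega>)\<^sup>2) / (real i)\<^sup>2) \<le> E"
    and cov_nonneg: "\<And>i j. 1 \<le> i \<Longrightarrow> i < j \<Longrightarrow> 0 \<le> covariance M (T i) (T j)"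
    and cov_sum: "\<And>F. finite F \<Longrightarrow> F \<subseteq> {(i, j). 1 \<le> i \<and> i < j} \<Longrightarrow>
      (\<Sum>(i, j)\<in>F. covariance M (T i) (T j) / (real i * real j)) \<le> C"
    and \<alpha>: "1 < \<alpha>"
  shows "summable (\<lambda>m. variance (\<lambda>\<omega>. \<Sum>i=1..floor_pow \<alpha> m. T i \<omega>) / (real (floor_pow \<alpha> m))\<^sup>2)"
proof (rule summableI_nonneg_bounded)
  let ?k = "floor_pow \<alpha>" and ?e = "\<lambda>i. expectation (\<lambda>\<omega>. (T i \<omega>)\<^sup>2)"
  let ?c = "\<lambda>N. \<Sum>(i, j)\<in>{(i, j). 1 \<le> i \<and> i < j \<and> j \<le> N}. covariance M (T i) (T j)"
  define D where "D = 4 * \<alpha>\<^sup>2 / (\<alpha>\<^sup>2 - 1)"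
  have variance_le: "variance (\<lambda>\<omega>. \<Sum>i=1..N. T i \<omega>) \<le> (\<Sum>i=1..N. ?e i) + 2 * ?c N" for N
  proof (intro variance_sum_le[where B="real N"])
    fix i \<omega> assume "i \<le> N" "\<omega> \<in> space M"
    then show "\<bar>T i \<omega>\<bar> \<le> real N"
      using bounded[of \<omega> i] by (simp add: abs_le_iff)
  qed simp
  fix L
  have "(\<Sum>m<L. variance (\<lambda>\<omega>. \<Sum>i=1..?k m. T i \<omega>) / (real (?k m))\<^sup>2)
      \<le> (\<Sum>m<L. ((\<Sum>i=1..?k m. ?e i) + 2 * ?c (?k m)) / (real (?k m))\<^sup>2)"
    using variance_le by (intro sum_mono divide_right_mono) auto
  also have "\<dots> = (\<Sum>m<L. (\<Sum>i=1..?k m. ?e i) / (real (?k m))\<^sup>2) + 2 * (\<Sum>m<L. ?c (?k m) / (real (?k m))\<^sup>2)"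
    by (simp add: add_divide_distrib sum.distrib sum_distrib_left)
  also have "\<dots> \<le> D * E + 2 * (D * C)"
    unfolding D_def using \<alpha> cov_nonneg cov_sum second_moments
    by (intro add_mono mult_left_mono sum_floor_pow_diag_le sum_floor_pow_pairs_le) auto
  finally show "(\<Sum>m<L. variance (\<lambda>\<omega>. \<Sum>i=1..?k m. T i \<omega>) / (real (?k m))\<^sup>2) \<le> D * E + 2 * (D * C)" .
qed simp

lemma AE_tendsto_centered_sum_floor_pow:
  fixes T :: "nat \<Rightarrow> 'a \<Rightarrow> real"
  assumes [measurable]: "\<And>i. T i \<in> borel_measurable M"
    and bounded: "\<And>i \<omega>. \<omega> \<in> space M \<Longrightarrow> 0 \<le> T i \<omega> \<and> T i \<omega> \<le> real i"
    and second_moments: "\<And>N. (\<Sum>i=1..N. expectation (\<lambda>\<omega>. (T i \<omega>)\<^sup>2) / (real i)\<^sup>2) \<le> E"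
    and cov_nonneg: "\<And>i j. 1 \<le> i \<Longrightarrow> i < j \<Longrightarrow> 0 \<le> covariance M (T i) (T j)"
    and cov_sum: "\<And>F. finite F \<Longrightarrow> F \<subseteq> {(i, j). 1 \<le> i \<and> i < j} \<Longrightarrow>
      (\<Sum>(i, j)\<in>F. covariance M (T i) (T j) / (real i * real j)) \<le> C"
    and \<alpha>: "1 < \<alpha>"
  shows "AE \<omega> in M. (\<lambda>m. ((\<Sum>i=1..floor_pow \<alpha> m. T i \<omega>) - (\<Sum>i=1..floor_pow \<alpha> m. expectation (T i)))
    / real (floor_pow \<alpha> m)) \<longlonglongrightarrow> 0"
proof -
  let ?S = "\<lambda>N \<omega>. \<Sum>i=1..N. T i \<omega>"
  have "expectation (?S N) = (\<Sum>i=1..N. expectation (T i))" for N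
    using bounded by (intro Bochner_Integration.integral_sum integrable_bounded[where B="real i" for i]) auto
  moreover have "AE \<omega> in M. (\<lambda>m. (?S (floor_pow \<alpha> m) \<omega> - expectation (?S (floor_pow \<alpha> m)))
      / real (floor_pow \<alpha> m)) \<longlonglongrightarrow> 0"
  proof (rule AE_tendsto_zero_if_summable_variance)
    show "integrable M (\<lambda>\<omega>. (?S N \<omega>)\<^sup>2)" for N
    proof (rule integrable_bounded[where B="(real N * real N)\<^sup>2"])
      fix \<omega> assume "\<omega> \<in> space M"
      then have "\<bar>?S N \<omega>\<bar> \<le> real N * real N"
        using bounded sum_bounded_above[of "{1..N}" "\<lambda>i. T i \<omega>" "real N"]
        by (simp add: abs_le_iff) (smt (verit) of_nat_le_iff sum_nonneg)
      then show "\<bar>(?S N \<omega>)\<^sup>2\<bar> \<le> (real N * real N)\<^sup>2"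
        by (simp add: abs_le_square_iff[symmetric])
    qed simp
    show "summable (\<lambda>m. variance (?S (floor_pow \<alpha> m)) / (real (floor_pow \<alpha> m))\<^sup>2)"
      by (rule summable_variance_floor_pow[OF _ bounded second_moments cov_nonneg cov_sum \<alpha>]) auto
  qed (use floor_pow_bounds(1)[of \<alpha>] \<alpha> in \<open>auto simp: Suc_le_eq\<close>)
  ultimately show ?thesis
    by simp
qed

lemma SLLN_nonneg:
  fixes Y :: "nat \<Rightarrow> 'a \<Rightarrow> real"
  assumes [measurable]: "\<And>n. Y n \<in> borel_measurable M"
    and nonneg: "\<And>n \<omega>. \<omega> \<in> space M \<Longrightarrow> 0 \<le> Y n \<omega>"
    and ident: "\<And>n. distr M borel (Y n) = distr M borel (Y 1)" and int: "integrable M (Y 1)"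
    and cov_nonneg: "\<And>i j. 1 \<le> i \<Longrightarrow> i < j \<Longrightarrow>
      0 \<le> covariance M (\<lambda>\<omega>. min (Y i \<omega>) (real i)) (\<lambda>\<omega>. min (Y j \<omega>) (real j))"
    and cov_sum: "\<And>F. finite F \<Longrightarrow> F \<subseteq> {(i, j). 1 \<le> i \<and> i < j} \<Longrightarrow>
      (\<Sum>(i, j)\<in>F. covariance M (\<lambda>\<omega>. min (Y i \<omega>) (real i)) (\<lambda>\<omega>. min (Y j \<omega>) (real j))
        / (real i * real j)) \<le> C"
  shows "AE \<omega> in M. (\<lambda>n. (\<Sum>i=1..n. Y i \<omega>) / real n) \<longlonglongrightarrow> expectation (Y 1)"
proof -
  define T where "T i = (\<lambda>\<omega>. min (Y i \<omega>) (real i))" for i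
  define \<alpha> where "\<alpha> r = 1 + 1 / real (Suc r)" for r
  have \<alpha>: "\<alpha> \<longlonglongrightarrow> 1" "1 < \<alpha> r" for r
    using LIMSEQ_inverse_real_of_nat_add[of 1] by (simp_all add: \<alpha>_def[abs_def] inverse_eq_divide)
  have [measurable]: "T i \<in> borel_measurable M" for i
    unfolding T_def by measurable
  have expectation_T: "expectation (\<lambda>\<omega>. f (T i \<omega>)) = expectation (\<lambda>\<omega>. f (min (Y 1 \<omega>) (real i)))"
    if [measurable]: "f \<in> borel_measurable borel" for f :: "real \<Rightarrow> real" and i
    unfolding T_def by (rule expectation_eq_if_distr_eq[where f="\<lambda>y. f (min y (real i))", OF _ _ _ ident]) measurable
  have "(\<lambda>i. expectation (T i)) \<longlonglongrightarrow> expectation (Y 1)"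
    using tendsto_expectation_min[of "Y 1"] expectation_T[of "\<lambda>y. y"] nonneg int by simp
  then have mean_T: "(\<lambda>N. (\<Sum>i=1..N. expectation (T i)) / real N) \<longlonglongrightarrow> expectation (Y 1)"
    by (rule tendsto_cesaro_mean)
  have "AE \<omega> in M. (\<lambda>m. ((\<Sum>i=1..floor_pow (\<alpha> r) m. T i \<omega>) - (\<Sum>i=1..floor_pow (\<alpha> r) m. expectation (T i)))
      / real (floor_pow (\<alpha> r) m)) \<longlonglongrightarrow> 0" for r
  proof (rule AE_tendsto_centered_sum_floor_pow[where E="3 * expectation (Y 1)" and C=C])
    show "(\<Sum>i=1..N. expectation (\<lambda>\<omega>. (T i \<omega>)\<^sup>2) / (real i)\<^sup>2) \<le> 3 * expectation (Y 1)" for N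
      using sum_truncated_second_moment_le[of "Y 1" N] expectation_T[of "\<lambda>y. y\<^sup>2"] nonneg int by simp
  qed (use nonneg cov_nonneg cov_sum \<alpha> in \<open>auto simp: T_def\<close>)
  then have "AE \<omega> in M. \<forall>r. (\<lambda>m. ((\<Sum>i=1..floor_pow (\<alpha> r) m. T i \<omega>)
      - (\<Sum>i=1..floor_pow (\<alpha> r) m. expectation (T i))) / real (floor_pow (\<alpha> r) m)) \<longlonglongrightarrow> 0"
    by (simp add: AE_all_countable)
  moreover have "AE \<omega> in M. eventually (\<lambda>n. Y n \<omega> = T n \<omega>) sequentially"
    using AE_eventually_truncation_eq[of Y] nonneg ident int by (simp add: T_def)
  ultimately show ?thesis
    using AE_space
  proof eventually_elim
    case (elim \<omega>)
    then show ?case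
      using nonneg by (intro tendsto_mean_if_floor_pow[OF _ _ mean_T \<alpha>]) auto
  qed
qed

section \<open>A second-moment argument for the converse\<close>

lemma integrable_if_sum_prob_gt_bounded:
  fixes V :: "'a \<Rightarrow> real"
  assumes [measurable]: "V \<in> borel_measurable M"
    and bounded: "\<And>N. (\<Sum>n<N. prob {\<omega>\<in>space M. real (Suc n) < V \<omega>}) \<le> B"
  shows "integrable M (\<lambda>\<omega>. max (V \<omega>) 0)"
proof (rule integrableI_nonneg)
  let ?A = "\<lambda>n. {\<omega>\<in>space M. real (Suc n) < V \<omega>}"
  have summable: "summable (\<lambda>n. prob (?A n))"
    using bounded by (intro summableI_nonneg_bounded) auto
  have "ennreal (max (V \<omega>) 0) \<le> 1 + (\<Sum>n. indicator (?A n) \<omega>)" if "\<omega> \<in> space M" for \<omega>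
  proof -
    define N where "N = nat \<lceil>V \<omega>\<rceil>"
    have "max (V \<omega>) 0 = min (max (V \<omega>) 0) (real N + 1)"
      unfolding N_def by linarith
    also have "\<dots> \<le> 1 + (\<Sum>n<N. indicator (?A n) \<omega>)"
      using min_le_sum_of_bool_Suc_less[of "max (V \<omega>) 0" N] that
      by (simp add: of_bool_def indicator_def less_max_iff_disj)
    finally have "ennreal (max (V \<omega>) 0) \<le> ennreal (1 + (\<Sum>n<N. indicator (?A n) \<omega>))"
      by (rule ennreal_leI)
    also have "\<dots> = 1 + (\<Sum>n<N. indicator (?A n) \<omega>)"
      by (simp add: ennreal_plus sum_nonneg sum_ennreal[symmetric] ennreal_indicator)
    also have "\<dots> \<le> 1 + (\<Sum>n. indicator (?A n) \<omega>)"
      by (intro add_left_mono sum_le_suminf) auto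
    finally show ?thesis .
  qed
  then have "(\<integral>\<^sup>+\<omega>. ennreal (max (V \<omega>) 0) \<partial>M) \<le> (\<integral>\<^sup>+\<omega>. 1 + (\<Sum>n. indicator (?A n) \<omega>) \<partial>M)"
    by (intro nn_integral_mono) auto
  also have "\<dots> = 1 + (\<Sum>n. emeasure M (?A n))"
    by (subst nn_integral_add) (auto simp: nn_integral_suminf emeasure_space_1)
  also have "\<dots> = 1 + ennreal (\<Sum>n. prob (?A n))"
    using summable by (simp add: emeasure_eq_measure suminf_ennreal2)
  also have "\<dots> < \<infinity>"
    by simp
  finally show "(\<integral>\<^sup>+\<omega>. ennreal (max (V \<omega>) 0) \<partial>M) < \<infinity>" .
qed auto

lemma null_sets_if_prob_le_tendsto_0:
  assumes "A \<in> events" "eventually (\<lambda>N. prob A \<le> f N) sequentially" "f \<longlonglongrightarrow> 0"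
  shows "A \<in> null_sets M"
proof -
  have "prob A \<le> 0"
    using assms(2,3) by (intro tendsto_le[OF trivial_limit_sequentially assms(3) tendsto_const]) auto
  then show ?thesis
    using assms(1) by (simp add: null_sets_def emeasure_eq_measure measure_le_0_iff)
qed

lemma variance_sum_unit_interval_le:
  fixes Z :: "nat \<Rightarrow> 'a \<Rightarrow> real"
  assumes [measurable]: "\<And>n. Z n \<in> borel_measurable M"
    and bounded: "\<And>n \<omega>. \<omega> \<in> space M \<Longrightarrow> 0 \<le> Z n \<omega> \<and> Z n \<omega> \<le> 1"
  shows "variance (\<lambda>\<omega>. \<Sum>n=1..N. Z n \<omega>) \<le> (\<Sum>n=1..N. expectation (Z n))
    + 2 * (\<Sum>(i, j)\<in>{(i, j). 1 \<le> i \<and> i < j \<and> j \<le> N}. covariance M (Z i) (Z j))"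
proof -
  have "expectation (\<lambda>\<omega>. (Z n \<omega>)\<^sup>2) \<le> expectation (Z n)" for n
    using bounded by (intro integral_mono integrable_bounded[where B=1])
      (auto simp: power2_eq_square abs_le_iff mult_le_one mult_left_le)
  then have "(\<Sum>n=1..N. expectation (\<lambda>\<omega>. (Z n \<omega>)\<^sup>2)) \<le> (\<Sum>n=1..N. expectation (Z n))"
    by (rule sum_mono)
  moreover have "variance (\<lambda>\<omega>. \<Sum>n=1..N. Z n \<omega>) \<le> (\<Sum>n=1..N. expectation (\<lambda>\<omega>. (Z n \<omega>)\<^sup>2))
      + 2 * (\<Sum>(i, j)\<in>{(i, j). 1 \<le> i \<and> i < j \<and> j \<le> N}. covariance M (Z i) (Z j))"
    using bounded by (intro variance_sum_le[where B=1]) (auto simp: abs_le_iff)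
  ultimately show ?thesis
    by linarith
qed

lemma null_sets_bounded_partial_sums:
  fixes Z :: "nat \<Rightarrow> 'a \<Rightarrow> real"
  assumes [measurable]: "\<And>n. Z n \<in> borel_measurable M"
    and bounded: "\<And>n \<omega>. \<omega> \<in> space M \<Longrightarrow> 0 \<le> Z n \<omega> \<and> Z n \<omega> \<le> 1"
    and divergent: "filterlim (\<lambda>N. \<Sum>n=1..N. expectation (Z n)) at_top sequentially"
    and cov_sum: "\<And>N. (\<Sum>(i, j)\<in>{(i, j). 1 \<le> i \<and> i < j \<and> j \<le> N}. covariance M (Z i) (Z j)) \<le> C"
  shows "{\<omega>\<in>space M. \<forall>N. (\<Sum>n=1..N. Z n \<omega>) \<le> B} \<in> null_sets M"
proof (rule null_sets_if_prob_le_tendsto_0)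
  let ?S = "\<lambda>N \<omega>. \<Sum>n=1..N. Z n \<omega>" and ?s = "\<lambda>N. \<Sum>n=1..N. expectation (Z n)"
  let ?E = "{\<omega>\<in>space M. \<forall>N. ?S N \<omega> \<le> B}"
  have expectation_S: "expectation (?S N) = ?s N" for N
    using bounded by (intro Bochner_Integration.integral_sum integrable_bounded[where B=1]) (auto simp: abs_le_iff)
  have bound: "prob ?E \<le> (?s N + 2 * C) / (?s N - B)\<^sup>2" if "B < ?s N" for N
  proof -
    have "?E \<subseteq> {\<omega>\<in>space M. ?s N - B \<le> \<bar>?S N \<omega> - expectation (?S N)\<bar>}"
      using expectation_S by (auto dest!: spec[of _ N])
    then have "prob ?E \<le> prob {\<omega>\<in>space M. ?s N - B \<le> \<bar>?S N \<omega> - expectation (?S N)\<bar>}"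
      by (intro finite_measure_mono) auto
    also have "\<dots> \<le> variance (?S N) / (?s N - B)\<^sup>2"
    proof (intro Chebyshev_inequality)
      show "integrable M (\<lambda>\<omega>. (?S N \<omega>)\<^sup>2)"
      proof (rule integrable_bounded[where B="(real N)\<^sup>2"])
        fix \<omega> assume "\<omega> \<in> space M"
        then have "\<bar>?S N \<omega>\<bar> \<le> real N"
          using bounded sum_bounded_above[of "{1..N}" "\<lambda>n. Z n \<omega>" 1] by (simp add: sum_nonneg)
        then show "\<bar>(?S N \<omega>)\<^sup>2\<bar> \<le> (real N)\<^sup>2"
          by (simp add: abs_le_square_iff[symmetric])
      qed simp
    qed (use that in auto)
    also have "\<dots> \<le> (?s N + 2 * C) / (?s N - B)\<^sup>2"
      using variance_sum_unit_interval_le[of Z N, OF assms(1) bounded] cov_sum[of N]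
      by (intro divide_right_mono) auto
    finally show ?thesis .
  qed
  have "eventually (\<lambda>N. B < ?s N) sequentially"
    using divergent by (simp add: filterlim_at_top_dense)
  then show "eventually (\<lambda>N. prob ?E \<le> (?s N + 2 * C) / (?s N - B)\<^sup>2) sequentially"
    by (rule eventually_mono) (rule bound)
  show "(\<lambda>N. (?s N + 2 * C) / (?s N - B)\<^sup>2) \<longlonglongrightarrow> 0"
    by (rule tendsto_div_square_at_top[OF divergent])
qed measurable

lemma AE_frequently_pos_if_divergent:
  fixes Z :: "nat \<Rightarrow> 'a \<Rightarrow> real"
  assumes [measurable]: "\<And>n. Z n \<in> borel_measurable M"
    and bounded: "\<And>n \<omega>. \<omega> \<in> space M \<Longrightarrow> 0 \<le> Z n \<omega> \<and> Z n \<omega> \<le> 1"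
    and divergent: "\<And>b. \<exists>N. b \<le> (\<Sum>n=1..N. expectation (Z n))"
    and cov_sum: "\<And>N. (\<Sum>(i, j)\<in>{(i, j). 1 \<le> i \<and> i < j \<and> j \<le> N}. covariance M (Z i) (Z j)) \<le> C"
  shows "AE \<omega> in M. frequently (\<lambda>n. 0 < Z n \<omega>) sequentially"
proof (rule AE_I')
  let ?E = "\<lambda>B. {\<omega>\<in>space M. \<forall>N. (\<Sum>n=1..N. Z n \<omega>) \<le> real B}"
  have "mono (\<lambda>N. \<Sum>n=1..N. expectation (Z n))"
    using bounded by (auto intro!: monoI sum_mono2 integral_nonneg_AE)
  have "filterlim (\<lambda>N. \<Sum>n=1..N. expectation (Z n)) at_top sequentially"
    unfolding filterlim_at_top
  proof
    fix b
    obtain N where "b \<le> (\<Sum>n=1..N. expectation (Z n))"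
      using divergent by blast
    then show "eventually (\<lambda>N. b \<le> (\<Sum>n=1..N. expectation (Z n))) sequentially"
      using \<open>mono _\<close> by (intro eventually_sequentiallyI[of N]) (auto dest: monoD)
  qed
  then show "(\<Union>B. ?E B) \<in> null_sets M"
    by (intro null_sets_UN null_sets_bounded_partial_sums[OF assms(1) bounded _ cov_sum])
  show "{\<omega>\<in>space M. \<not> frequently (\<lambda>n. 0 < Z n \<omega>) sequentially} \<subseteq> (\<Union>B. ?E B)"
  proof safe
    fix \<omega> assume \<omega>: "\<omega> \<in> space M" and "\<not> frequently (\<lambda>n. 0 < Z n \<omega>) sequentially"
    then obtain B where "\<And>n. B \<le> n \<Longrightarrow> \<not> 0 < Z n \<omega>"
      by (auto simp: not_frequently eventually_sequentially)
    then have zero: "Z n \<omega> = 0" if "B \<le> n" for n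
      using bounded[OF \<omega>, of n] that by fastforce
    have "(\<Sum>n=1..N. Z n \<omega>) \<le> real B" for N
    proof -
      have "(\<Sum>n=1..N. Z n \<omega>) = (\<Sum>n\<in>{1..N} \<inter> {..<B}. Z n \<omega>)"
        using zero by (intro sum.mono_neutral_right) (auto simp: not_less)
      also have "\<dots> \<le> (\<Sum>n<B. Z n \<omega>)"
        using bounded[OF \<omega>] by (intro sum_mono2) auto
      also have "\<dots> \<le> real B"
        using sum_bounded_above[of "{..<B}" "\<lambda>n. Z n \<omega>" 1] bounded[OF \<omega>] by simp
      finally show ?thesis .
    qed
    then show "\<omega> \<in> (\<Union>B. ?E B)"
      using \<omega> by blast
  qed
qed

end

definition step_ramp :: "nat \<Rightarrow> real \<Rightarrow> real" where
  "step_ramp n x = 2 / real n * ramp (real n / 2) (real n) x"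

lemma step_ramp_measurable[measurable]: "step_ramp n \<in> borel_measurable borel"
  unfolding step_ramp_def by measurable

lemma step_ramp_bounds: "0 \<le> step_ramp n x \<and> step_ramp n x \<le> 1"
  using ramp_bounds[of "real n / 2" "real n" x] by (cases "n = 0") (auto simp: step_ramp_def field_simps)

lemma step_ramp_eq_1: "0 < n \<Longrightarrow> real n < x \<Longrightarrow> step_ramp n x = 1"
  by (simp add: step_ramp_def ramp_def field_simps)

lemma step_ramp_pos_imp: "0 < step_ramp n x \<Longrightarrow> real n / 2 < x"
proof -
  assume "0 < step_ramp n x"
  then have "0 < ramp (real n / 2) (real n) x"
    by (auto simp: step_ramp_def zero_less_mult_iff zero_less_divide_iff)
  then show ?thesis
    by (auto simp: ramp_def max_def min_def split: if_splits)
qed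

context prob_space
begin

lemma divergent_sum_expectation_step_ramp:
  fixes X :: "nat \<Rightarrow> 'a \<Rightarrow> real"
  assumes [measurable]: "\<And>n. X n \<in> borel_measurable M"
    and ident: "\<And>n. distr M borel (X n) = distr M borel (X 1)"
    and not_int: "\<not> integrable M (\<lambda>\<omega>. max (X 1 \<omega>) 0)"
  shows "\<exists>N. b \<le> (\<Sum>n=1..N. expectation (\<lambda>\<omega>. step_ramp n (X n \<omega>)))"
proof -
  have "\<not> (\<forall>N. (\<Sum>n<N. prob {\<omega>\<in>space M. real (Suc n) < X 1 \<omega>}) \<le> b)"
    using not_int integrable_if_sum_prob_gt_bounded[of "X 1" b] by auto
  then obtain N where "b < (\<Sum>n<N. prob {\<omega>\<in>space M. real (Suc n) < X 1 \<omega>})"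
    by (auto simp: not_le)
  also have "\<dots> \<le> (\<Sum>n<N. expectation (\<lambda>\<omega>. step_ramp (Suc n) (X (Suc n) \<omega>)))"
  proof (rule sum_mono)
    fix n
    let ?A = "{\<omega>\<in>space M. real (Suc n) < X (Suc n) \<omega>}"
    have "prob {\<omega>\<in>space M. real (Suc n) < X 1 \<omega>} = prob ?A"
      using prob_eq_if_distr_eq[of "X (Suc n)" "X 1" "{real (Suc n)<..}"] ident by simp
    also have "\<dots> = expectation (indicator ?A)"
      by simp
    also have "\<dots> \<le> expectation (\<lambda>\<omega>. step_ramp (Suc n) (X (Suc n) \<omega>))"
    proof (intro integral_mono integrable_bounded[where B=1])
      fix \<omega>
      show "indicator ?A \<omega> \<le> step_ramp (Suc n) (X (Suc n) \<omega>)"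
        using step_ramp_bounds step_ramp_eq_1[of "Suc n"] by (simp add: indicator_def)
    qed (use step_ramp_bounds in \<open>auto simp: emeasure_eq_measure\<close>)
    finally show "prob {\<omega>\<in>space M. real (Suc n) < X 1 \<omega>} \<le> expectation (\<lambda>\<omega>. step_ramp (Suc n) (X (Suc n) \<omega>))" .
  qed
  also have "\<dots> = (\<Sum>n=1..N. expectation (\<lambda>\<omega>. step_ramp n (X n \<omega>)))"
    by (simp add: sum.atLeast1_atMost_eq)
  finally show ?thesis
    by (auto intro: less_imp_le)
qed

lemma sum_covariance_step_ramp_le:
  fixes X :: "nat \<Rightarrow> 'a \<Rightarrow> real"
  assumes [measurable]: "\<And>n. X n \<in> borel_measurable M"
    and cov: "ramp_cov_bounded M X g"
    and g_sum: "\<And>F. finite F \<Longrightarrow> F \<subseteq> {(i, j). 1 \<le> i \<and> i < j} \<Longrightarrow> (\<Sum>(i, j)\<in>F. g i j / (real i * real j)) \<le> C"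
  shows "(\<Sum>(i, j)\<in>{(i, j). 1 \<le> i \<and> i < j \<and> j \<le> N}.
    covariance M (\<lambda>\<omega>. step_ramp i (X i \<omega>)) (\<lambda>\<omega>. step_ramp j (X j \<omega>))) \<le> 4 * C"
proof -
  let ?U = "{(i, j). 1 \<le> i \<and> i < j \<and> j \<le> N}"
  have cov_le: "covariance M (\<lambda>\<omega>. step_ramp i (X i \<omega>)) (\<lambda>\<omega>. step_ramp j (X j \<omega>))
      \<le> 4 * (g i j / (real i * real j))" if "1 \<le> i" "i < j" for i j
  proof -
    let ?R = "\<lambda>k \<omega>. ramp (real k / 2) (real k) (X k \<omega>)"
    have "covariance M (\<lambda>\<omega>. step_ramp i (X i \<omega>)) (\<lambda>\<omega>. step_ramp j (X j \<omega>))
        = (2 / real i) * (2 / real j) * covariance M (?R i) (?R j)"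
      using covariance_affine[of "?R i" "?R j" 0 "2 / real i" 0 "2 / real j"]
      by (simp add: step_ramp_def integrable_ramp integrable_ramp_mult)
    also have "\<dots> \<le> (2 / real i) * (2 / real j) * g i j"
      using cov that unfolding ramp_cov_bounded_def by (intro mult_left_mono) auto
    finally show ?thesis
      by (simp add: field_simps)
  qed
  have "(\<Sum>(i, j)\<in>?U. covariance M (\<lambda>\<omega>. step_ramp i (X i \<omega>)) (\<lambda>\<omega>. step_ramp j (X j \<omega>)))
      \<le> (\<Sum>(i, j)\<in>?U. 4 * (g i j / (real i * real j)))"
    by (intro sum_mono) (clarify, rule cov_le; simp)
  also have "\<dots> = 4 * (\<Sum>(i, j)\<in>?U. g i j / (real i * real j))"
    by (simp add: sum_distrib_left case_prod_unfold)
  also have "\<dots> \<le> 4 * C"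
  proof -
    have "finite ?U"
      by (rule finite_subset[of _ "{..N} \<times> {..N}"]) auto
    then show ?thesis
      using g_sum[of ?U] by auto
  qed
  finally show ?thesis .
qed

lemma integrable_positive_part_if_ratio_tendsto:
  fixes X :: "nat \<Rightarrow> 'a \<Rightarrow> real"
  assumes [measurable]: "\<And>n. X n \<in> borel_measurable M"
    and ident: "\<And>n. distr M borel (X n) = distr M borel (X 1)"
    and cov: "ramp_cov_bounded M X g"
    and g_sum: "\<And>F. finite F \<Longrightarrow> F \<subseteq> {(i, j). 1 \<le> i \<and> i < j} \<Longrightarrow> (\<Sum>(i, j)\<in>F. g i j / (real i * real j)) \<le> C"
    and ratio: "AE \<omega> in M. (\<lambda>n. X n \<omega> / real n) \<longlonglongrightarrow> 0"
  shows "integrable M (\<lambda>\<omega>. max (X 1 \<omega>) 0)"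
proof (rule ccontr)
  assume not_int: "\<not> integrable M (\<lambda>\<omega>. max (X 1 \<omega>) 0)"
  have "AE \<omega> in M. frequently (\<lambda>n. 0 < step_ramp n (X n \<omega>)) sequentially"
  proof (rule AE_frequently_pos_if_divergent)
    show "\<exists>N. b \<le> (\<Sum>n=1..N. expectation (\<lambda>\<omega>. step_ramp n (X n \<omega>)))" for b
      by (rule divergent_sum_expectation_step_ramp[of X, OF assms(1) ident not_int])
    show "(\<Sum>(i, j)\<in>{(i, j). 1 \<le> i \<and> i < j \<and> j \<le> N}.
        covariance M (\<lambda>\<omega>. step_ramp i (X i \<omega>)) (\<lambda>\<omega>. step_ramp j (X j \<omega>))) \<le> 4 * C" for N
      by (rule sum_covariance_step_ramp_le[of X, OF assms(1) cov g_sum])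
  qed (use step_ramp_bounds in auto)
  with ratio have "AE \<omega> in M. False"
  proof eventually_elim
    case (elim \<omega>)
    have "eventually (\<lambda>n. X n \<omega> / real n < 1 / 2) sequentially"
      using elim(1) by (rule order_tendstoD) simp
    moreover have "eventually (\<lambda>n. 1 \<le> n) sequentially"
      by (rule eventually_ge_at_top)
    ultimately have "eventually (\<lambda>n. \<not> 0 < step_ramp n (X n \<omega>)) sequentially"
      by eventually_elim (auto dest!: step_ramp_pos_imp simp: field_simps)
    then show False
      using elim(2) by (simp add: frequently_def)
  qed
  then show False
    by simp
qed

section \<open>The strong law under bounded covariances of clipped variables\<close>

lemma SLLN_positive_part:
  fixes X :: "nat \<Rightarrow> 'a \<Rightarrow> real"
  assumes [measurable]: "\<And>n. X n \<in> borel_measurable M"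
    and ident: "\<And>n. distr M borel (X n) = distr M borel (X 1)"
    and int: "integrable M (\<lambda>\<omega>. max (X 1 \<omega>) 0)"
    and cov: "ramp_cov_bounded M X g"
    and g_sum: "\<And>F. finite F \<Longrightarrow> F \<subseteq> {(i, j). 1 \<le> i \<and> i < j} \<Longrightarrow> (\<Sum>(i, j)\<in>F. g i j / (real i * real j)) \<le> C"
  shows "AE \<omega> in M. (\<lambda>n. (\<Sum>i=1..n. max (X i \<omega>) 0) / real n) \<longlonglongrightarrow> expectation (\<lambda>\<omega>. max (X 1 \<omega>) 0)"
proof (rule SLLN_nonneg[where Y="\<lambda>n \<omega>. max (X n \<omega>) 0" and C=C])
  have truncation: "(\<lambda>\<omega>. min (max (X i \<omega>) 0) (real i)) = (\<lambda>\<omega>. ramp 0 (real i) (X i \<omega>))" for i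
    by (auto simp: ramp_def)
  have cov_in: "covariance M (\<lambda>\<omega>. min (max (X i \<omega>) 0) (real i)) (\<lambda>\<omega>. min (max (X j \<omega>) 0) (real j)) \<in> {0..g i j}"
    if "1 \<le> i" "i < j" for i j
    using cov that unfolding truncation ramp_cov_bounded_def by auto
  then show "0 \<le> covariance M (\<lambda>\<omega>. min (max (X i \<omega>) 0) (real i)) (\<lambda>\<omega>. min (max (X j \<omega>) 0) (real j))"
    if "1 \<le> i" "i < j" for i j
    using that by auto
  fix F :: "(nat \<times> nat) set" assume F: "finite F" "F \<subseteq> {(i, j). 1 \<le> i \<and> i < j}"
  have "(\<Sum>(i, j)\<in>F. covariance M (\<lambda>\<omega>. min (max (X i \<omega>) 0) (real i))
      (\<lambda>\<omega>. min (max (X j \<omega>) 0) (real j)) / (real i * real j)) \<le> (\<Sum>(i, j)\<in>F. g i j / (real i * real j))"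
    using F cov_in by (intro sum_mono) (auto simp: divide_right_mono)
  also have "\<dots> \<le> C"
    by (rule g_sum[OF F])
  finally show "(\<Sum>(i, j)\<in>F. covariance M (\<lambda>\<omega>. min (max (X i \<omega>) 0) (real i))
      (\<lambda>\<omega>. min (max (X j \<omega>) 0) (real j)) / (real i * real j)) \<le> C" .
qed (use ident int in \<open>auto intro: distr_comp_eq\<close>)

lemma distr_uminus_eq:
  fixes X :: "nat \<Rightarrow> 'a \<Rightarrow> real"
  assumes [measurable]: "\<And>n. X n \<in> borel_measurable M"
    and ident: "\<And>n. distr M borel (X n) = distr M borel (X 1)"
  shows "distr M borel (\<lambda>\<omega>. - X n \<omega>) = distr M borel (\<lambda>\<omega>. - X 1 \<omega>)"
  by (rule distr_comp_eq[OF _ _ _ ident]) auto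

lemma AE_tendsto_mean_if_integrable:
  fixes X :: "nat \<Rightarrow> 'a \<Rightarrow> real"
  assumes [measurable]: "\<And>n. X n \<in> borel_measurable M"
    and ident: "\<And>n. distr M borel (X n) = distr M borel (X 1)"
    and cov: "ramp_cov_bounded M X g"
    and g_sum: "\<And>F. finite F \<Longrightarrow> F \<subseteq> {(i, j). 1 \<le> i \<and> i < j} \<Longrightarrow> (\<Sum>(i, j)\<in>F. g i j / (real i * real j)) \<le> C"
    and int: "integrable M (X 1)"
  shows "AE \<omega> in M. (\<lambda>n. (\<Sum>k=1..n. X k \<omega> - expectation (X 1)) / real n) \<longlonglongrightarrow> 0"
proof -
  have parts: "expectation (X 1) = expectation (\<lambda>\<omega>. max (X 1 \<omega>) 0) - expectation (\<lambda>\<omega>. max (- X 1 \<omega>) 0)"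
  proof -
    have "expectation (\<lambda>\<omega>. max (X 1 \<omega>) 0) - expectation (\<lambda>\<omega>. max (- X 1 \<omega>) 0) =
        expectation (\<lambda>\<omega>. max (X 1 \<omega>) 0 - max (- X 1 \<omega>) 0)"
      using int by (intro Bochner_Integration.integral_diff[symmetric]) auto
    also have "\<dots> = expectation (X 1)"
      by (rule Bochner_Integration.integral_cong) auto
    finally show ?thesis
      by simp
  qed
  have "AE \<omega> in M. (\<lambda>n. (\<Sum>i=1..n. max (X i \<omega>) 0) / real n) \<longlonglongrightarrow> expectation (\<lambda>\<omega>. max (X 1 \<omega>) 0)"
    using int by (intro SLLN_positive_part[of X, OF _ ident _ cov g_sum]) auto
  moreover have "AE \<omega> in M. (\<lambda>n. (\<Sum>i=1..n. max (- X i \<omega>) 0) / real n) \<longlonglongrightarrow> expectation (\<lambda>\<omega>. max (- X 1 \<omega>) 0)"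
    using int ramp_cov_bounded_uminus[OF cov]
    by (intro SLLN_positive_part[of "\<lambda>n \<omega>. - X n \<omega>", OF _ distr_uminus_eq[of X, OF assms(1) ident] _ _ g_sum])
      auto
  ultimately show ?thesis
  proof eventually_elim
    case (elim \<omega>)
    have "(\<lambda>n. (\<Sum>i=1..n. max (X i \<omega>) 0) / real n - (\<Sum>i=1..n. max (- X i \<omega>) 0) / real n
        - expectation (X 1)) \<longlonglongrightarrow> 0"
      using tendsto_diff[OF tendsto_diff[OF elim] tendsto_const[of "expectation (X 1)"]] parts by simp
    moreover have "eventually (\<lambda>n. (\<Sum>i=1..n. max (X i \<omega>) 0) / real n - (\<Sum>i=1..n. max (- X i \<omega>) 0) / real n
        - expectation (X 1) = (\<Sum>k=1..n. X k \<omega> - expectation (X 1)) / real n) sequentially"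
      by (intro eventually_sequentiallyI[of 1]) (rule mean_centered_eq_positive_negative_parts[symmetric])
    ultimately show ?case
      by (rule Lim_transform_eventually)
  qed
qed

lemma integrable_if_AE_tendsto_mean:
  fixes X :: "nat \<Rightarrow> 'a \<Rightarrow> real"
  assumes [measurable]: "\<And>n. X n \<in> borel_measurable M"
    and ident: "\<And>n. distr M borel (X n) = distr M borel (X 1)"
    and cov: "ramp_cov_bounded M X g"
    and g_sum: "\<And>F. finite F \<Longrightarrow> F \<subseteq> {(i, j). 1 \<le> i \<and> i < j} \<Longrightarrow> (\<Sum>(i, j)\<in>F. g i j / (real i * real j)) \<le> C"
    and mean: "AE \<omega> in M. (\<lambda>n. (\<Sum>k=1..n. X k \<omega> - expectation (X 1)) / real n) \<longlonglongrightarrow> 0"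
  shows "integrable M (X 1)"
proof -
  have ratio: "AE \<omega> in M. (\<lambda>n. X n \<omega> / real n) \<longlonglongrightarrow> 0"
    using mean
  proof eventually_elim
    case (elim \<omega>)
    have "(\<lambda>n. (X n \<omega> - expectation (X 1)) / real n + expectation (X 1) / real n) \<longlonglongrightarrow> 0 + 0"
      using tendsto_term_over_n_if_mean[OF elim] lim_const_over_n by (rule tendsto_add)
    then show ?case
      by (simp add: add_divide_distrib[symmetric])
  qed
  have "integrable M (\<lambda>\<omega>. max (X 1 \<omega>) 0)"
    by (rule integrable_positive_part_if_ratio_tendsto[of X, OF _ ident cov g_sum ratio]) simp
  moreover have "integrable M (\<lambda>\<omega>. max (- X 1 \<omega>) 0)"
    using ratio ramp_cov_bounded_uminus[OF cov]
    by (intro integrable_positive_part_if_ratio_tendsto[of "\<lambda>n \<omega>. - X n \<omega>",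
          OF _ distr_uminus_eq[of X, OF assms(1) ident] _ g_sum])
      (auto elim!: eventually_mono dest: tendsto_minus)
  ultimately have "integrable M (\<lambda>\<omega>. max (X 1 \<omega>) 0 - max (- X 1 \<omega>) 0)"
    by (rule Bochner_Integration.integrable_diff)
  moreover have "(\<lambda>\<omega>. max (X 1 \<omega>) 0 - max (- X 1 \<omega>) 0) = X 1"
    by (auto simp: fun_eq_iff)
  ultimately show ?thesis
    by simp
qed

text \<open>The hypotheses only concern indices \<open>n \<ge> 1\<close>; the proof works with the sequence in which \<open>X 0\<close>
  is replaced by \<open>X 1\<close>.\<close>
lemma SLLN_iff_integrable:
  fixes X :: "nat \<Rightarrow> 'a \<Rightarrow> real"
  assumes rv: "\<And>n. 1 \<le> n \<Longrightarrow> X n \<in> borel_measurable M"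
    and ident: "\<And>n. 1 \<le> n \<Longrightarrow> distr M borel (X n) = distr M borel (X 1)"
    and cov: "ramp_cov_bounded M X g"
    and summable: "(\<lambda>(i, j). g i j / (real i * real j)) summable_on {(i, j). 1 \<le> i \<and> i < j}"
  shows "integrable M (X 1) \<longleftrightarrow>
    (AE \<omega> in M. (\<lambda>n. (\<Sum>k=1..n. X k \<omega> - expectation (X 1)) / real n) \<longlonglongrightarrow> 0)"
proof -
  define Y where "Y n = X (max 1 n)" for n
  have Y_X: "Y n = X n" if "1 \<le> n" for n
    using that by (simp add: Y_def max_absorb2)
  have [measurable]: "Y n \<in> borel_measurable M" for n
    unfolding Y_def by (rule rv) simp
  have ident_Y: "distr M borel (Y n) = distr M borel (Y 1)" for n
    unfolding Y_def using ident[of "max 1 n"] by simp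
  have cov_Y: "ramp_cov_bounded M Y g"
    unfolding ramp_cov_bounded_def
  proof (intro allI impI)
    fix i j :: nat and a1 b1 a2 b2 :: real
    assume box: "1 \<le> i \<and> i < j \<and> - real i \<le> a1 \<and> a1 \<le> b1 \<and> b1 \<le> real i \<and>
      - real j \<le> a2 \<and> a2 \<le> b2 \<and> b2 \<le> real j"
    then have "Y i = X i" "Y j = X j"
      by (auto intro: Y_X)
    then show "covariance M (\<lambda>\<omega>. ramp a1 b1 (Y i \<omega>)) (\<lambda>\<omega>. ramp a2 b2 (Y j \<omega>)) \<in> {0..g i j}"
      using cov box unfolding ramp_cov_bounded_def by simp
  qed
  have "(\<Sum>(i, j)\<in>F. g i j / (real i * real j)) \<le> (\<Sum>\<^sub>\<infinity>(i, j)\<in>{(i, j). 1 \<le> i \<and> i < j}. g i j / (real i * real j))"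
    if "finite F" "F \<subseteq> {(i, j). 1 \<le> i \<and> i < j}" for F
    using that ramp_cov_bounded_nonneg[OF cov]
    by (intro finite_sum_le_has_sum[OF has_sum_infsum[OF summable]]) (auto simp del: of_nat_mult)
  then have "integrable M (Y 1) \<longleftrightarrow>
      (AE \<omega> in M. (\<lambda>n. (\<Sum>k=1..n. Y k \<omega> - expectation (Y 1)) / real n) \<longlonglongrightarrow> 0)"
    using AE_tendsto_mean_if_integrable[of Y, OF _ ident_Y cov_Y] integrable_if_AE_tendsto_mean[of Y, OF _ ident_Y cov_Y]
    by (intro iffI) auto
  moreover have "Y 1 = X 1"
    by (simp add: Y_X)
  moreover have "(\<Sum>k=1..n. Y k \<omega> - c) = (\<Sum>k=1..n. X k \<omega> - c)" for n \<omega> c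
    by (rule sum.cong) (auto simp: Y_X)
  ultimately show ?thesis
    by simp
qed

end

theorem corollary2:
  fixes M :: "'a measure" and X :: "nat \<Rightarrow> 'a \<Rightarrow> real"
  assumes "prob_space M"
    and rv: "\<And>n. 1 \<le> n \<Longrightarrow> X n \<in> borel_measurable M"
    and ident: "\<And>n. 1 \<le> n \<Longrightarrow> distr M borel (X n) = distr M borel (X 1)"
    and pqd: "pairwise_PQD M X"
    and ser: "(\<lambda>(k, j). G M (X k) (X j) (real k) (real j) / (real k * real j))
               summable_on {(k, j). 1 \<le> k \<and> k < j}"
  shows "integrable M (X 1) \<longleftrightarrow>
    (AE \<omega> in M. (\<lambda>n. (\<Sum>k=1..n. X k \<omega> - integral\<^sup>L M (X 1)) / real n) \<longlonglongrightarrow> 0)"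
proof -
  interpret prob_space M by fact
  have "ramp_cov_bounded M X (\<lambda>i j. G M (X i) (X j) (real i) (real j))"
    by (rule ramp_cov_bounded_if_PQD[OF pqd rv])
  then show ?thesis
    using ser by (intro SLLN_iff_integrable[of X, OF rv ident]) auto
qed

end
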